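(* Let $i,j\geq0$, let $R=(\gamma_{\mathrm{low}},\gamma_{\mathrm{mid}},\gamma_{\mathrm{up}})\in\mathcal{R}_{i,j}$, and let $A$ be its blue-red arc diagram. Then $R\in\mathcal{G}_{i,j}$ if and only if $A$ has no Z-pattern.
   Context: Walks are words on $\{N,E\}$, viewed as lattice paths from $(0,0)$ with steps $N=(0,1)$, $E=(1,0)$. For walks $\gamma,\gamma'$, $\gamma'$ is above $\gamma$ if same endpoint and no East step of $\gamma$ lies strictly above the East step of $\gamma'$ in the same column. For $\nu$ ending at $(i,j)$, $\mathcal{W}_\nu$ is the set of walks above $\nu$. For $\gamma\in\mathcal{W}_\nu$ and a point $p=(x,y)$ on $\gamma$, let $x'$ be the abscissa of the North step of $\nu$ from ordinate $y$ to $y+1$ ($x'=i$ if $y=j$), $\ell(p)=x'-x$; if $p$ is preceded by $E$ and followed by $N$, let $p'$ be the next point after $p$ along $\gamma$ with $\ell(p')=\ell(p)$ and $\mathrm{push}_p(\gamma)$ the walk obtained by moving the $E$ preceding $p$ to just after $p'$. $\mathrm{Tam}(\nu)$ is the order on $\mathcal{W}_\nu$ given by the reflexive-transitive closure of $\gamma\le\mathrm{push}_p(\gamma)$. $\mathcal{R}_{i,j}$ is the set of triples $(\nu,\gamma,\gamma')$ of walks ending at $(i,j)$ with $\gamma'$ above $\gamma$ and $\gamma$ above $\nu$; $\mathcal{G}_{i,j}$ is the set of triples with $\nu$ ending at $(i,j)$, $\gamma,\gamma'\in\mathcal{W}_\nu$ and $\gamma\le\gamma'$ in $\mathrm{Tam}(\nu)$.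 Blue-red arc diagram of $(\gamma_{\mathrm{low}},\gamma_{\mathrm{mid}},\gamma_{\mathrm{up}})\in\mathcal{R}_{i,j}$: for $r=0,\dots,j$ let $\alpha_r,\mu_r,\beta_r$ be the numbers of East steps at height $r$ of $\gamma_{\mathrm{low}},\gamma_{\mathrm{mid}},\gamma_{\mathrm{up}}$. Place on a line, for $r=0,\dots,j$ successively, $\alpha_r$ blue dots, then $\mu_r$ black dots, then $\beta_r$ red dots. Below the line, blue dots are matched to black dots by the non-crossing matching where each arc has a blue left end and a black right end; above the line, black dots are matched to red dots by the non-crossing matching where each arc has a black left end and a red right end (these exist since each walk is above the previous one). A Z-pattern is a pair of a lower arc $a$ (blue dot $d_1$, black dot $d_3$) and an upper arc $a'$ (black dot $d_0$, red dot $d_2$) with $d_0<d_1<d_2<d_3$ along the line, i.e. the blue end of $a$ is enclosed within $a'$ and the red end of $a'$ is enclosed within $a$. *)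

theory Defs
  imports Main
begin

datatype step = N | E

type_synonym walk = "step list"

definition cntE :: "walk \<Rightarrow> nat" where
  "cntE w = length (filter (\<lambda>s. s = E) w)"

definition cntN :: "walk \<Rightarrow> nat" where
  "cntN w = length (filter (\<lambda>s. s = N) w)"

definition endpt :: "walk \<Rightarrow> nat \<times> nat" where
  "endpt w = (cntE w, cntN w)"

text \<open>The k-th point visited by the walk (k = 0 .. length w).\<close>
definition pt :: "walk \<Rightarrow> nat \<Rightarrow> nat \<times> nat" where
  "pt w k = (cntE (take k w), cntN (take k w))"

text \<open>above g' g: g' is above g. The East step with index k starts at
  point pt w k; its column is the abscissa, its height the ordinate.\<close>
definition above :: "walk \<Rightarrow> walk \<Rightarrow> bool" where
  "above g' g \<longleftrightarrow> endpt g' = endpt g \<and>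
     \<not> (\<exists>k k'. k < length g \<and> k' < length g' \<and> g ! k = E \<and> g' ! k' = E \<and>
          cntE (take k g) = cntE (take k' g') \<and> cntN (take k g) > cntN (take k' g'))"

definition Wset :: "walk \<Rightarrow> walk set" where
  "Wset \<nu> = {g. above g \<nu>}"

text \<open>Abscissa x' of the North step of nu from ordinate y to y+1 (x' = i if y = j).\<close>
definition nabs :: "walk \<Rightarrow> nat \<Rightarrow> nat" where
  "nabs \<nu> y = (if y = cntN \<nu> then cntE \<nu>
     else cntE (take (THE k. k < length \<nu> \<and> \<nu> ! k = N \<and> cntN (take k \<nu>) = y) \<nu>))"

definition ldist :: "walk \<Rightarrow> nat \<times> nat \<Rightarrow> int" where
  "ldist \<nu> p = int (nabs \<nu> (snd p)) - int (fst p)"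

text \<open>Moving the East step preceding point number k to just after point number k'.\<close>
definition push_word :: "walk \<Rightarrow> nat \<Rightarrow> nat \<Rightarrow> walk" where
  "push_word g k k' = take (k - 1) g @ take (k' - k) (drop k g) @ [E] @ drop k' g"

text \<open>One push step: p = point number k of g, preceded by E and followed by N;
  p' = point number k' is the next point after p along g with l(p') = l(p).\<close>
definition tam_step :: "walk \<Rightarrow> walk \<Rightarrow> walk \<Rightarrow> bool" where
  "tam_step \<nu> g g' \<longleftrightarrow> g \<in> Wset \<nu> \<and>
     (\<exists>k k'. 0 < k \<and> k < length g \<and> g ! (k - 1) = E \<and> g ! k = N \<and>
        k < k' \<and> k' \<le> length g \<and> ldist \<nu> (pt g k') = ldist \<nu> (pt g k) \<and>
        (\<forall>m. k < m \<and> m < k' \<longrightarrow> ldist \<nu> (pt g m) \<noteq> ldist \<nu> (pt g k)) \<and>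
        g' = push_word g k k')"

definition tam_le :: "walk \<Rightarrow> walk \<Rightarrow> walk \<Rightarrow> bool" where
  "tam_le \<nu> = (tam_step \<nu>)\<^sup>*\<^sup>*"

definition Rset :: "nat \<Rightarrow> nat \<Rightarrow> (walk \<times> walk \<times> walk) set" where
  "Rset i j = {(\<nu>, g, g'). endpt \<nu> = (i, j) \<and> endpt g = (i, j) \<and> endpt g' = (i, j) \<and>
       above g' g \<and> above g \<nu>}"

definition Gset :: "nat \<Rightarrow> nat \<Rightarrow> (walk \<times> walk \<times> walk) set" where
  "Gset i j = {(\<nu>, g, g'). endpt \<nu> = (i, j) \<and> g \<in> Wset \<nu> \<and> g' \<in> Wset \<nu> \<and> tam_le \<nu> g g'}"

datatype colour = Blue | Black | Red

definition east_at :: "walk \<Rightarrow> nat \<Rightarrow> nat" where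
  "east_at w r = card {k. k < length w \<and> w ! k = E \<and> cntN (take k w) = r}"

definition dots :: "nat \<Rightarrow> walk \<Rightarrow> walk \<Rightarrow> walk \<Rightarrow> colour list" where
  "dots j lo mid up = concat (map (\<lambda>r. replicate (east_at lo r) Blue @
        replicate (east_at mid r) Black @ replicate (east_at up r) Red) [0..<Suc j])"

definition nc_matching :: "colour list \<Rightarrow> colour \<Rightarrow> colour \<Rightarrow> (nat \<times> nat) set \<Rightarrow> bool" where
  "nc_matching cs L R M \<longleftrightarrow>
     (\<forall>(a, b) \<in> M. a < b \<and> b < length cs \<and> cs ! a = L \<and> cs ! b = R) \<and>
     (\<forall>d < length cs. (cs ! d = L \<or> cs ! d = R) \<longrightarrow>
          card {e \<in> M. fst e = d \<or> snd e = d} = 1) \<and>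
     (\<forall>(a, b) \<in> M. \<forall>(c, d) \<in> M. \<not> (a < c \<and> c < b \<and> b < d))"

definition lower_arcs :: "nat \<Rightarrow> walk \<Rightarrow> walk \<Rightarrow> walk \<Rightarrow> (nat \<times> nat) set" where
  "lower_arcs j lo mid up = (THE M. nc_matching (dots j lo mid up) Blue Black M)"

definition upper_arcs :: "nat \<Rightarrow> walk \<Rightarrow> walk \<Rightarrow> walk \<Rightarrow> (nat \<times> nat) set" where
  "upper_arcs j lo mid up = (THE M. nc_matching (dots j lo mid up) Black Red M)"

definition has_Z_pattern :: "nat \<Rightarrow> walk \<Rightarrow> walk \<Rightarrow> walk \<Rightarrow> bool" where
  "has_Z_pattern j lo mid up \<longleftrightarrow>
     (\<exists>d0 d1 d2 d3. (d1, d3) \<in> lower_arcs j lo mid up \<and> (d0, d2) \<in> upper_arcs j lo mid up \<and>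
        d0 < d1 \<and> d1 < d2 \<and> d2 < d3)"

end

theory Submission
  imports Defs
begin

text \<open>Write \<open>f = gap lo mid\<close> and \<open>g = gap lo up\<close> for the row-by-row horizontal distances of
  \<open>mid\<close> and \<open>up\<close> from \<open>lo\<close>. A push in \<open>Tam(lo)\<close> raises \<open>f\<close> by one on a window of rows \<open>[y, y')\<close>
  starting at a strict minimum of \<open>f\<close>, and such a move never destroys a Z-pattern of the profiles
  (rows \<open>r < t\<close> with \<open>f r < f t\<close> and \<open>g - f\<close> at \<open>t\<close> below all its values on \<open>[r, t)\<close>); as
  \<open>f = g\<close> has none, Tamari intervals have no Z-pattern. Conversely, if there is none, pushing \<open>mid\<close>
  at the first row where it differs from \<open>up\<close> keeps it below \<open>up\<close> and creates no Z-pattern, so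
  iterating reaches \<open>up\<close>. Finally, the balance of blue over black dots at the end of row \<open>s\<close> is
  \<open>f s\<close>, that of black over red dots is \<open>g s - f s\<close>, the non-crossing matchings are the
  first-return matchings of these balances, and a Z-pattern of arcs is exactly a Z-pattern of the
  profiles.\<close>

section \<open>Discrete sequences and sorted lists\<close>

lemma obtain_least:
  fixes n :: "'a::wellorder"
  assumes "P n"
  obtains m where "P m" "\<And>k. k < m \<Longrightarrow> \<not> P k"
  using assms exists_least_iff[of P] by blast

lemma int_unit_descent_hits:
  fixes h :: "nat \<Rightarrow> int"
  assumes "a \<le> b" "v \<le> h a" "h b \<le> v" "\<And>m. a \<le> m \<Longrightarrow> m < b \<Longrightarrow> h m - 1 \<le> h (Suc m)"
  shows "\<exists>m. a \<le> m \<and> m \<le> b \<and> h m = v"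
  using assms
proof (induction b)
  case (Suc b)
  show ?case
  proof (cases "a = Suc b")
    case False
    then have ab: "a \<le> b" using Suc.prems by simp
    show ?thesis
    proof (cases "h b \<le> v")
      case True
      then show ?thesis using Suc.IH[OF ab Suc.prems(2) True] Suc.prems(4) by force
    next
      case False
      then have "v \<le> h (Suc b)" using Suc.prems(4) ab by force
      then show ?thesis using Suc.prems by (intro exI[of _ "Suc b"]) auto
    qed
  qed (use Suc.prems in auto)
qed auto

lemma int_unit_descent_stays_above:
  fixes h :: "nat \<Rightarrow> int"
  assumes "h k \<le> h (Suc k)" "\<And>m. m < k' \<Longrightarrow> h m - 1 \<le> h (Suc m)"
    and "\<And>m. k < m \<Longrightarrow> m < k' \<Longrightarrow> h m \<noteq> h k"
  shows "k < m \<Longrightarrow> m < k' \<Longrightarrow> h k < h m"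
proof (induction m)
  case (Suc m)
  then have "h k \<le> h (Suc m)"
    using assms(1) assms(2)[of m] by (cases "m = k") force+
  then show ?case using assms(3)[of "Suc m"] Suc.prems by fastforce
qed simp

lemma last_rise:
  fixes F :: "nat \<Rightarrow> int"
  assumes "r0 < t" "F r0 < F t"
  obtains r where "r0 \<le> r" "r < t" "F r < F t" "\<And>s. r < s \<Longrightarrow> s < t \<Longrightarrow> F t \<le> F s"
proof -
  define A where "A = {r. r0 \<le> r \<and> r < t \<and> F r < F t}"
  have fin: "finite A" by (rule finite_subset[of _ "{..<t}"]) (auto simp: A_def)
  have "r0 \<in> A" using assms by (simp add: A_def)
  define r where "r = Max A"
  have "r \<in> A" using Max_in[OF fin] \<open>r0 \<in> A\<close> by (auto simp: r_def)
  moreover have "F t \<le> F s" if "r < s" "s < t" for s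
  proof (rule ccontr)
    assume "\<not> F t \<le> F s"
    then have "s \<in> A" using that \<open>r \<in> A\<close> by (auto simp: A_def)
    then show False using Max_ge[OF fin, of s] that by (simp add: r_def)
  qed
  ultimately show ?thesis using that[of r] by (auto simp: A_def)
qed

lemma sorted_nth_le_iff_count:
  fixes xs :: "'a::linorder list"
  assumes "sorted xs" "c < length xs"
  shows "xs ! c \<le> r \<longleftrightarrow> c < length (filter (\<lambda>h. h \<le> r) xs)"
  using assms
proof (induction xs arbitrary: c)
  case (Cons x xs)
  show ?case
  proof (cases "x \<le> r")
    case False
    then have "filter (\<lambda>h. h \<le> r) (x # xs) = []" "x \<le> (x # xs) ! c"
      using Cons.prems by (auto simp: filter_empty_conv nth_Cons split: nat.split)
    then show ?thesis using False by auto
  qed (use Cons in \<open>auto simp: nth_Cons split: nat.split\<close>)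
qed simp

lemma sorted_pointwise_le_iff_count_le:
  fixes xs ys :: "'a::linorder list"
  assumes "sorted xs" "sorted ys" "length xs = length ys"
  shows "(\<forall>c<length xs. xs ! c \<le> ys ! c) \<longleftrightarrow>
         (\<forall>r. length (filter (\<lambda>h. h \<le> r) ys) \<le> length (filter (\<lambda>h. h \<le> r) xs))"
proof (intro iffI allI impI)
  fix r assume le: "\<forall>c<length xs. xs ! c \<le> ys ! c"
  show "length (filter (\<lambda>h. h \<le> r) ys) \<le> length (filter (\<lambda>h. h \<le> r) xs)"
  proof (rule ccontr)
    define c where "c = length (filter (\<lambda>h. h \<le> r) xs)"
    assume "\<not> ?thesis"
    then have "c < length (filter (\<lambda>h. h \<le> r) ys)" by (simp add: c_def)
    moreover have "c < length xs"
      using calculation length_filter_le[of "\<lambda>h. h \<le> r" ys] assms(3) by linarith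
    ultimately have "xs ! c \<le> r"
      using le sorted_nth_le_iff_count[OF assms(2), of c r] assms(3) order_trans by auto
    then show False using sorted_nth_le_iff_count[OF assms(1) \<open>c < length xs\<close>] by (simp add: c_def)
  qed
next
  fix c assume count: "\<forall>r. length (filter (\<lambda>h. h \<le> r) ys) \<le> length (filter (\<lambda>h. h \<le> r) xs)"
    and "c < length xs"
  then show "xs ! c \<le> ys ! c"
    using sorted_nth_le_iff_count[OF assms(1), of c "ys ! c"] sorted_nth_le_iff_count[OF assms(2), of c "ys ! c"]
      assms(3) less_le_trans by auto
qed

section \<open>Counting steps of walks\<close>

lemma cntE_simps [simp]:
  "cntE [] = 0" "cntE (E # w) = Suc (cntE w)" "cntE (N # w) = cntE w"
  "cntE (u @ v) = cntE u + cntE v"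
  by (auto simp: cntE_def)

lemma cntN_simps [simp]:
  "cntN [] = 0" "cntN (N # w) = Suc (cntN w)" "cntN (E # w) = cntN w"
  "cntN (u @ v) = cntN u + cntN v"
  by (auto simp: cntN_def)

lemma cntE_take_le: "cntE (take k w) \<le> cntE w"
  by (metis append_take_drop_id cntE_simps(4) le_add1)

lemma cntN_take_le: "cntN (take k w) \<le> cntN w"
  by (metis append_take_drop_id cntN_simps(4) le_add1)

lemma cntN_take_mono: "k1 \<le> k2 \<Longrightarrow> cntN (take k1 w) \<le> cntN (take k2 w)"
  by (metis cntN_take_le min.absorb1 take_take)

lemma cnt_take_Suc_E:
  "k < length w \<Longrightarrow> w ! k = E \<Longrightarrow>
     cntE (take (Suc k) w) = Suc (cntE (take k w)) \<and> cntN (take (Suc k) w) = cntN (take k w)"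
  by (simp add: take_Suc_conv_app_nth)

lemma cnt_take_Suc_N:
  "k < length w \<Longrightarrow> w ! k = N \<Longrightarrow>
     cntE (take (Suc k) w) = cntE (take k w) \<and> cntN (take (Suc k) w) = Suc (cntN (take k w))"
  by (simp add: take_Suc_conv_app_nth)

lemma cntN_take_strict_mono:
  assumes "k1 < k2" "k1 < length w" "w ! k1 = N"
  shows "cntN (take k1 w) < cntN (take k2 w)"
  using cnt_take_Suc_N[OF assms(2,3)] cntN_take_mono[of "Suc k1" k2 w] assms(1) by simp

lemma east_step_in_column: "c < cntE w \<Longrightarrow> \<exists>k<length w. w ! k = E \<and> cntE (take k w) = c"
proof (induction w arbitrary: c)
  case Nil then show ?case by simp
next
  case (Cons x w)
  show ?case
  proof (cases x)
    case N
    then obtain k where "k < length w" "w ! k = E" "cntE (take k w) = c" using Cons by auto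
    then show ?thesis using N by (intro exI[of _ "Suc k"]) auto
  next
    case E
    show ?thesis
    proof (cases c)
      case 0 then show ?thesis using E by (intro exI[of _ 0]) auto
    next
      case (Suc c')
      then obtain k where "k < length w" "w ! k = E" "cntE (take k w) = c'" using Cons E by auto
      then show ?thesis using E Suc by (intro exI[of _ "Suc k"]) auto
    qed
  qed
qed

lemma north_step_at_height: "y < cntN w \<Longrightarrow> \<exists>k<length w. w ! k = N \<and> cntN (take k w) = y"
proof (induction w arbitrary: y)
  case Nil then show ?case by simp
next
  case (Cons x w)
  show ?case
  proof (cases x)
    case E
    then obtain k where "k < length w" "w ! k = N" "cntN (take k w) = y" using Cons by auto
    then show ?thesis using E by (intro exI[of _ "Suc k"]) auto
  next
    case N
    show ?thesis
    proof (cases y)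
      case 0 then show ?thesis using N by (intro exI[of _ 0]) auto
    next
      case (Suc y')
      then obtain k where "k < length w" "w ! k = N" "cntN (take k w) = y'" using Cons N by auto
      then show ?thesis using N Suc by (intro exI[of _ "Suc k"]) auto
    qed
  qed
qed

text \<open>\<open>east_upto w r\<close> counts the East steps of \<open>w\<close> at height at most \<open>r\<close>, that is, the
  abscissa at which \<open>w\<close> leaves row \<open>r\<close>.\<close>
fun east_upto :: "walk \<Rightarrow> nat \<Rightarrow> nat" where
  "east_upto [] r = 0"
| "east_upto (E # w) r = Suc (east_upto w r)"
| "east_upto (N # w) r = (case r of 0 \<Rightarrow> 0 | Suc r' \<Rightarrow> east_upto w r')"

lemma east_upto_append:
  "east_upto (u @ v) r = east_upto u r + (if cntN u \<le> r then east_upto v (r - cntN u) else 0)"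
proof (induction u arbitrary: r)
  case (Cons x u)
  then show ?case by (cases x; cases r) auto
qed simp

lemma east_upto_mono: "r \<le> r' \<Longrightarrow> east_upto w r \<le> east_upto w r'"
proof (induction w arbitrary: r r')
  case (Cons x w)
  then show ?case by (cases x; cases r; cases r') auto
qed simp

lemma east_upto_top: "cntN w \<le> r \<Longrightarrow> east_upto w r = cntE w"
proof (induction w arbitrary: r)
  case (Cons x w)
  then show ?case by (cases x; cases r) auto
qed simp

lemma east_upto_at_north_step:
  assumes "k < length w" "w ! k = N"
  shows "east_upto w (cntN (take k w)) = cntE (take k w)"
proof -
  have "drop k w = N # drop (Suc k) w" using assms by (metis Cons_nth_drop_Suc)
  moreover have "east_upto w (cntN (take k w)) = east_upto (take k w @ drop k w) (cntN (take k w))"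
    by simp
  ultimately show ?thesis by (simp only: east_upto_append east_upto_top) simp
qed

lemma cntE_take_le_east_upto: "cntE (take k w) \<le> east_upto w (cntN (take k w))"
  using east_upto_append[of "take k w" "drop k w" "cntN (take k w)"] by (simp add: east_upto_top)

lemma east_upto_inject: "cntN w1 = cntN w2 \<Longrightarrow> (\<forall>r. east_upto w1 r = east_upto w2 r) \<Longrightarrow> w1 = w2"
proof (induction w1 arbitrary: w2)
  case Nil
  then show ?case
  proof (cases w2)
    case (Cons x w) then show ?thesis using Nil by (cases x) (auto dest: spec[of _ 0])
  qed simp
next
  case (Cons x w1)
  show ?case
  proof (cases x)
    case E
    then have "east_upto w2 0 \<noteq> 0" using Cons.prems(2) by (metis east_upto.simps(2) nat.distinct(1))
    then obtain w2' where w2: "w2 = E # w2'"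
    proof (cases w2)
      case (Cons z w) then show ?thesis using that \<open>east_upto w2 0 \<noteq> 0\<close> by (cases z) auto
    qed simp
    have "\<forall>r. east_upto w1 r = east_upto w2' r" using Cons.prems(2) E w2 by simp
    then show ?thesis using Cons.IH[of w2'] Cons.prems(1) E w2 by simp
  next
    case N
    then have c: "cntN w2 \<noteq> 0" using Cons.prems(1) by simp
    have "east_upto w2 0 = 0" using Cons.prems(2) N by (metis east_upto.simps(3) old.nat.simps(4))
    then obtain w2' where w2: "w2 = N # w2'"
    proof (cases w2)
      case (Cons z w) then show ?thesis using that \<open>east_upto w2 0 = 0\<close> by (cases z) auto
    qed (use c in simp)
    have "\<forall>r. east_upto w1 r = east_upto w2' r"
    proof
      fix r show "east_upto w1 r = east_upto w2' r" using Cons.prems(2)[rule_format, of "Suc r"] N w2 by simp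
    qed
    then show ?thesis using Cons.IH[of w2'] Cons.prems(1) N w2 by simp
  qed
qed

fun east_heights :: "walk \<Rightarrow> nat list" where
  "east_heights [] = []"
| "east_heights (E # w) = 0 # east_heights w"
| "east_heights (N # w) = map Suc (east_heights w)"

lemma length_east_heights[simp]: "length (east_heights w) = cntE w"
  by (induction w rule: east_heights.induct) auto

lemma sorted_east_heights: "sorted (east_heights w)"
  by (induction w rule: east_heights.induct) (auto simp: sorted_map)

lemma east_upto_eq_count_heights: "east_upto w r = length (filter (\<lambda>h. h \<le> r) (east_heights w))"
proof (induction w arbitrary: r)
  case Nil then show ?case by simp
next
  case (Cons x w)
  then show ?case by (cases x; cases r; auto simp: filter_map o_def)
qed

lemma nth_east_heights: "k < length w \<Longrightarrow> w ! k = E \<Longrightarrow> east_heights w ! cntE (take k w) = cntN (take k w)"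
proof (induction w arbitrary: k)
  case Nil then show ?case by simp
next
  case (Cons x w)
  show ?case
  proof (cases k)
    case 0 then show ?thesis using Cons by (cases x) auto
  next
    case (Suc k')
    then have k': "k' < length w" "w ! k' = E" using Cons.prems by auto
    have lt: "cntE (take k' w) < cntE w"
    proof -
      have "take (Suc k') w = take k' w @ [w ! k']" using k' by (simp add: take_Suc_conv_app_nth)
      moreover have "cntE (take (Suc k') w) \<le> cntE w" by (rule cntE_take_le)
      ultimately show ?thesis using k' by simp
    qed
    show ?thesis using Cons.IH[OF k'] Suc lt by (cases x) auto
  qed
qed

lemma east_step_iff_heights:
  "(\<exists>k<length w. w ! k = E \<and> cntE (take k w) = c \<and> cntN (take k w) = h) \<longleftrightarrow>
     c < cntE w \<and> east_heights w ! c = h"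
proof
  assume "\<exists>k<length w. w ! k = E \<and> cntE (take k w) = c \<and> cntN (take k w) = h"
  then obtain k where k: "k < length w" "w ! k = E" "cntE (take k w) = c" "cntN (take k w) = h"
    by blast
  then show "c < cntE w \<and> east_heights w ! c = h"
    using cnt_take_Suc_E[OF k(1,2)] cntE_take_le[of "Suc k" w] nth_east_heights[OF k(1,2)] by simp
next
  assume "c < cntE w \<and> east_heights w ! c = h"
  then show "\<exists>k<length w. w ! k = E \<and> cntE (take k w) = c \<and> cntN (take k w) = h"
    using east_step_in_column[of c w] nth_east_heights by metis
qed

lemma above_iff_heights:
  "above g' g \<longleftrightarrow> endpt g' = endpt g \<and> (\<forall>c < cntE g. east_heights g ! c \<le> east_heights g' ! c)"
proof -
  have "(\<exists>k k'. k < length g \<and> k' < length g' \<and> g ! k = E \<and> g' ! k' = E \<and>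
          cntE (take k g) = cntE (take k' g') \<and> cntN (take k g) > cntN (take k' g')) \<longleftrightarrow>
        (\<exists>c. c < cntE g \<and> c < cntE g' \<and> east_heights g' ! c < east_heights g ! c)"
    (is "?steps \<longleftrightarrow> ?columns")
  proof
    assume ?steps
    then obtain k k' where "k < length g" "g ! k = E" "k' < length g'" "g' ! k' = E"
      "cntE (take k g) = cntE (take k' g')" "cntN (take k' g') < cntN (take k g)"
      by blast
    then show ?columns
      using east_step_iff_heights[of g "cntE (take k g)" "cntN (take k g)"]
        east_step_iff_heights[of g' "cntE (take k' g')" "cntN (take k' g')"] by auto
  next
    assume ?columns
    then obtain c where c: "c < cntE g" "c < cntE g'" "east_heights g' ! c < east_heights g ! c"
      by blast
    then obtain k k' where "k < length g" "g ! k = E" "cntE (take k g) = c"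
      "cntN (take k g) = east_heights g ! c" "k' < length g'" "g' ! k' = E" "cntE (take k' g') = c"
      "cntN (take k' g') = east_heights g' ! c"
      using east_step_iff_heights[of g c "east_heights g ! c"]
        east_step_iff_heights[of g' c "east_heights g' ! c"] by blast
    then show ?steps using c(3) by (intro exI[of _ k] exI[of _ k']) simp
  qed
  then show ?thesis unfolding above_def by (auto simp: endpt_def not_le)
qed

lemma above_iff_east_upto:
  "above g' g \<longleftrightarrow> endpt g' = endpt g \<and> (\<forall>r. east_upto g' r \<le> east_upto g r)"
proof -
  have "endpt g' = endpt g \<Longrightarrow> length (east_heights g) = length (east_heights g')" by (simp add: endpt_def)
  then show ?thesis
    using sorted_pointwise_le_iff_count_le[OF sorted_east_heights[of g] sorted_east_heights[of g']]
    unfolding above_iff_heights east_upto_eq_count_heights by (metis length_east_heights)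
qed

lemma above_trans: "above g'' g' \<Longrightarrow> above g' g \<Longrightarrow> above g'' g"
  by (auto simp: above_iff_east_upto intro: le_trans)

lemma east_at_Nil: "east_at [] r = 0"
  by (simp add: east_at_def)

lemma east_at_Cons:
  "east_at (x # w) r = (if x = E \<and> r = 0 then 1 else 0) +
      card {k. k < length w \<and> w ! k = E \<and> cntN (take k w) + (if x = N then 1 else 0) = r}"
proof -
  let ?A = "{k. k < length (x # w) \<and> (x # w) ! k = E \<and> cntN (take k (x # w)) = r}"
  let ?B = "{k. k < length w \<and> w ! k = E \<and> cntN (take k w) + (if x = N then 1 else 0) = r}"
  have eq: "?A = (if x = E \<and> r = 0 then {0} else {}) \<union> Suc ` ?B"
  proof (intro equalityI subsetI)
    fix k assume k: "k \<in> ?A"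
    show "k \<in> (if x = E \<and> r = 0 then {0} else {}) \<union> Suc ` ?B"
    proof (cases k)
      case 0 then show ?thesis using k by (cases x) auto
    next
      case (Suc k') then show ?thesis using k by (cases x) auto
    qed
  next
    fix k assume k: "k \<in> (if x = E \<and> r = 0 then {0} else {}) \<union> Suc ` ?B"
    then show "k \<in> ?A" by (cases x) (auto split: if_splits)
  qed
  have "finite ?B" by simp
  moreover have "0 \<notin> Suc ` ?B" by auto
  ultimately have "card ?A = (if x = E \<and> r = 0 then 1 else 0) + card ?B"
    unfolding eq by (simp add: card_image)
  then show ?thesis by (simp add: east_at_def)
qed

lemma east_at_E: "east_at (E # w) r = (if r = 0 then 1 else 0) + east_at w r"
proof -
  have "east_at (E # w) r = (if r = 0 then 1 else 0) +
      card {k. k < length w \<and> w ! k = E \<and> cntN (take k w) = r}"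
    using east_at_Cons[of E w r] by simp
  then show ?thesis by (simp add: east_at_def)
qed

lemma east_at_N: "east_at (N # w) r = (case r of 0 \<Rightarrow> 0 | Suc r' \<Rightarrow> east_at w r')"
proof -
  have "east_at (N # w) r = card {k. k < length w \<and> w ! k = E \<and> Suc (cntN (take k w)) = r}"
    using east_at_Cons[of N w r] by simp
  then show ?thesis by (cases r) (simp_all add: east_at_def)
qed

lemma east_at_plus_east_upto_below: "east_at w r + (case r of 0 \<Rightarrow> 0 | Suc r' \<Rightarrow> east_upto w r') = east_upto w r"
proof (induction w arbitrary: r)
  case Nil then show ?case by (simp add: east_at_Nil split: nat.split)
next
  case (Cons x w)
  show ?case
  proof (cases x)
    case E then show ?thesis using Cons[of r] by (cases r) (auto simp: east_at_E)
  next
    case N then show ?thesis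
    proof (cases r)
      case 0 then show ?thesis using N by (simp add: east_at_N)
    next
      case (Suc r') then show ?thesis using N Cons[of r'] by (cases r') (auto simp: east_at_N)
    qed
  qed
qed

lemma sum_east_at: "(\<Sum>q<Suc s. east_at w q) = east_upto w s"
proof (induction s)
  case 0 then show ?case using east_at_plus_east_upto_below[of w 0] by simp
next
  case (Suc s) then show ?case using east_at_plus_east_upto_below[of w "Suc s"] by simp
qed

lemma nabs_eq_east_upto: "y \<le> cntN \<nu> \<Longrightarrow> nabs \<nu> y = east_upto \<nu> y"
proof (cases "y = cntN \<nu>")
  case True then show ?thesis by (simp add: nabs_def east_upto_top)
next
  case False
  assume "y \<le> cntN \<nu>"
  then have y: "y < cntN \<nu>" using False by simp
  let ?P = "\<lambda>k. k < length \<nu> \<and> \<nu> ! k = N \<and> cntN (take k \<nu>) = y"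
  have ex: "\<exists>!k. ?P k"
  proof -
    obtain k where k: "?P k" using north_step_at_height[OF y] by blast
    have "k' = k" if "?P k'" for k'
    proof (rule ccontr)
      assume "k' \<noteq> k"
      then have "k' < k \<or> k < k'" by arith
      then show False
      proof
        assume "k' < k" then show False using cntN_take_strict_mono[of k' k \<nu>] that k by simp
      next
        assume "k < k'" then show False using cntN_take_strict_mono[of k k' \<nu>] that k by simp
      qed
    qed
    then show ?thesis using k by blast
  qed
  have P: "?P (THE k. ?P k)" using theI'[OF ex] .
  have "nabs \<nu> y = cntE (take (THE k. ?P k) \<nu>)" using False by (simp add: nabs_def)
  also have "\<dots> = east_upto \<nu> y" using east_upto_at_north_step[of "THE k. ?P k" \<nu>] P by simp
  finally show ?thesis .
qed

section \<open>Gap profiles and pushes\<close>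

lemma push_word_decomp:
  assumes "0 < k" "k \<le> k'" "k' \<le> length g" "g ! (k - 1) = E"
  shows "g = take (k - 1) g @ [E] @ take (k' - k) (drop k g) @ drop k' g"
proof -
  have "drop (k - 1) g = g ! (k - 1) # drop k g"
    using assms by (metis Cons_nth_drop_Suc Suc_diff_1 le_less_trans less_le_trans diff_less zero_less_one)
  moreover have "drop k g = take (k' - k) (drop k g) @ drop k' g"
    using assms(2) by (metis append_take_drop_id drop_drop le_add_diff_inverse2)
  ultimately show ?thesis using assms(4) by (metis append_Cons append_Nil append_take_drop_id)
qed

lemma push_word_counts:
  assumes "0 < k" "k \<le> k'" "k' \<le> length g" "g ! (k - 1) = E"
  shows "int (east_upto (push_word g k k') r) =
           int (east_upto g r) - (if cntN (take k g) \<le> r \<and> r < cntN (take k' g) then 1 else 0)"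
    and "cntE (push_word g k k') = cntE g" and "cntN (push_word g k k') = cntN g"
proof -
  define A where "A = take (k - 1) g"
  define B where "B = take (k' - k) (drop k g)"
  define C where "C = drop k' g"
  have g: "g = A @ [E] @ B @ C" using push_word_decomp[OF assms] A_def B_def C_def by simp
  have pw: "push_word g k k' = A @ B @ [E] @ C" by (simp add: push_word_def A_def B_def C_def)
  have "length A = k - 1" "length B = k' - k" using assms by (simp_all add: A_def B_def)
  then have "k = length (A @ [E])" "k' = length (A @ [E] @ B)" using assms by simp_all
  then have "take k g = A @ [E]" "take k' g = A @ [E] @ B"
    by (metis g append.assoc append_eq_conv_conj)+
  then have y: "cntN (take k g) = cntN A" and y': "cntN (take k' g) = cntN A + cntN B" by simp_all
  show "int (east_upto (push_word g k k') r) =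
           int (east_upto g r) - (if cntN (take k g) \<le> r \<and> r < cntN (take k' g) then 1 else 0)"
    unfolding pw y y' by (subst g, simp add: east_upto_append, arith)
  show "cntE (push_word g k k') = cntE g" "cntN (push_word g k k') = cntN g"
    unfolding pw by (subst g; simp)+
qed

lemma ldist_pt:
  assumes "cntN g = cntN \<nu>"
  shows "ldist \<nu> (pt g m) = int (east_upto \<nu> (cntN (take m g))) - int (cntE (take m g))"
  using assms cntN_take_le[of m g] by (simp add: ldist_def pt_def nabs_eq_east_upto)

lemma ldist_pt_Suc_E:
  assumes "cntN g = cntN \<nu>" "m < length g" "g ! m = E"
  shows "ldist \<nu> (pt g (Suc m)) = ldist \<nu> (pt g m) - 1"
  using cnt_take_Suc_E[OF assms(2,3)] by (simp add: ldist_pt[OF assms(1)])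

lemma ldist_pt_Suc_N:
  assumes "cntN g = cntN \<nu>" "m < length g" "g ! m = N"
  shows "ldist \<nu> (pt g m) \<le> ldist \<nu> (pt g (Suc m))"
  using cnt_take_Suc_N[OF assms(2,3)]
    east_upto_mono[of "cntN (take m g)" "Suc (cntN (take m g))" \<nu>]
  by (simp add: ldist_pt[OF assms(1)])

lemma ldist_pt_Suc_ge:
  assumes "cntN g = cntN \<nu>" "m < length g"
  shows "ldist \<nu> (pt g m) - 1 \<le> ldist \<nu> (pt g (Suc m))"
  using ldist_pt_Suc_N[OF assms] ldist_pt_Suc_E[OF assms] by (cases "g ! m") auto

lemma ldist_pt_end:
  assumes "endpt g = endpt \<nu>"
  shows "ldist \<nu> (pt g (length g)) = 0"
  using assms by (simp add: endpt_def ldist_pt east_upto_top)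

text \<open>\<open>gap \<nu> g r\<close> is the horizontal distance between \<open>g\<close> and \<open>\<nu>\<close> in row \<open>r\<close>, measured where
  both walks leave that row; it is the function \<open>\<ell>\<close> at the North steps of \<open>g\<close>.\<close>
definition gap :: "walk \<Rightarrow> walk \<Rightarrow> nat \<Rightarrow> int" where
  "gap \<nu> g r = int (east_upto \<nu> r) - int (east_upto g r)"

lemma gap_nonneg: "above g \<nu> \<Longrightarrow> 0 \<le> gap \<nu> g r"
  by (simp add: gap_def above_iff_east_upto)

lemma gap_at_north_step:
  assumes "cntN g = cntN \<nu>" "k < length g" "g ! k = N"
  shows "gap \<nu> g (cntN (take k g)) = ldist \<nu> (pt g k)"
  using assms by (simp add: gap_def ldist_pt east_upto_at_north_step)

lemma gap_le_ldist:
  assumes "cntN g = cntN \<nu>"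
  shows "gap \<nu> g (cntN (take k g)) \<le> ldist \<nu> (pt g k)"
  using assms cntE_take_le_east_upto[of k g] by (simp add: gap_def ldist_pt)

text \<open>The effect of a push on the gap profile: it grows by one on the rows \<open>[y, y')\<close> swept by
  the moved East step, where \<open>y\<close> is a strict minimum of \<open>f\<close> on \<open>[y, y')\<close> and \<open>f\<close> is back
  at or below \<open>f y\<close> at \<open>y'\<close>.\<close>
definition profile_push :: "(nat \<Rightarrow> int) \<Rightarrow> nat \<Rightarrow> nat \<Rightarrow> (nat \<Rightarrow> int) \<Rightarrow> bool" where
  "profile_push f y y' f' \<longleftrightarrow> y < y' \<and> (\<forall>s. y < s \<and> s < y' \<longrightarrow> f y < f s) \<and> f y' \<le> f y \<and>
     f' = (\<lambda>r. if y \<le> r \<and> r < y' then f r + 1 else f r)"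

lemma push_word_profile_push:
  assumes cn: "cntN g = cntN \<nu>" and k: "0 < k" "k < length g" "g ! (k - 1) = E" "g ! k = N"
    and k': "k < k'" "k' \<le> length g" "ldist \<nu> (pt g k') = ldist \<nu> (pt g k)"
    and first: "\<And>m. k < m \<Longrightarrow> m < k' \<Longrightarrow> ldist \<nu> (pt g m) \<noteq> ldist \<nu> (pt g k)"
  shows "profile_push (gap \<nu> g) (cntN (take k g)) (cntN (take k' g)) (gap \<nu> (push_word g k k'))"
proof -
  define L where "L m = ldist \<nu> (pt g m)" for m
  have L_above: "L k < L m" if "k < m" "m < k'" for m
    using int_unit_descent_stays_above[of L k k'] that first ldist_pt_Suc_N[OF cn k(2,4)]
      ldist_pt_Suc_ge[OF cn] k' unfolding L_def by fastforce
  define y where "y = cntN (take k g)"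
  define y' where "y' = cntN (take k' g)"
  have gap_y: "gap \<nu> g y = L k"
    using gap_at_north_step[OF cn k(2,4)] by (simp add: L_def y_def)
  have "gap \<nu> g y < gap \<nu> g s" if s: "y < s" "s < y'" for s
  proof -
    have "s < cntN g" using s cntN_take_le[of k' g] by (simp add: y'_def)
    then obtain m where m: "m < length g" "g ! m = N" "cntN (take m g) = s"
      using north_step_at_height by blast
    have "k < m" "m < k'"
      using m s cntN_take_mono[of m k g] cntN_take_mono[of k' m g] unfolding y_def y'_def
      by (metis leI not_le)+
    then show ?thesis
      using L_above gap_y gap_at_north_step[OF cn m(1,2)] m(3) by (simp add: L_def)
  qed
  moreover have "gap \<nu> g y' \<le> gap \<nu> g y"
    using gap_le_ldist[OF cn, of k'] gap_y k'(3) by (simp add: L_def y'_def)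
  moreover have "y < y'"
    using cntN_take_strict_mono[OF k'(1) k(2,4)] by (simp add: y_def y'_def)
  moreover have "gap \<nu> (push_word g k k') r = (if y \<le> r \<and> r < y' then gap \<nu> g r + 1 else gap \<nu> g r)"
    for r
    using push_word_counts(1)[of k k' g r] k k' by (simp add: gap_def y_def y'_def)
  ultimately show ?thesis unfolding profile_push_def y_def y'_def by blast
qed

lemma tam_step_profile_push:
  assumes "tam_step \<nu> g g'"
  shows "\<exists>y y'. profile_push (gap \<nu> g) y y' (gap \<nu> g')"
proof -
  from assms obtain k k' where "0 < k" "k < length g" "g ! (k - 1) = E" "g ! k = N"
      "k < k'" "k' \<le> length g" "ldist \<nu> (pt g k') = ldist \<nu> (pt g k)"
      "\<forall>m. k < m \<and> m < k' \<longrightarrow> ldist \<nu> (pt g m) \<noteq> ldist \<nu> (pt g k)"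
      "g' = push_word g k k'" and "g \<in> Wset \<nu>"
    unfolding tam_step_def by blast
  moreover from \<open>g \<in> Wset \<nu>\<close> have "cntN g = cntN \<nu>"
    by (simp add: Wset_def above_def endpt_def)
  ultimately show ?thesis using push_word_profile_push[of g \<nu> k k'] by blast
qed

lemma tam_step_endpt:
  assumes "tam_step \<nu> g g'"
  shows "endpt g' = endpt g"
proof -
  from assms obtain k k' where "0 < k" "k < length g" "g ! (k - 1) = E"
      "k < k'" "k' \<le> length g" "g' = push_word g k k'"
    unfolding tam_step_def by blast
  then show ?thesis using push_word_counts(2,3)[of k k' g] by (simp add: endpt_def)
qed

lemma east_before_north_step:
  assumes k: "k < length g" "g ! k = N" and row: "0 < east_at g (cntN (take k g))"
  shows "0 < k \<and> g ! (k - 1) = E"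
proof -
  define y where "y = cntN (take k g)"
  have "(case y of 0 \<Rightarrow> 0 | Suc y' \<Rightarrow> east_upto g y') < east_upto g y"
    using row east_at_plus_east_upto_below[of g y] by (simp add: y_def)
  moreover have "east_upto g y = cntE (take k g)"
    using east_upto_at_north_step[OF k] by (simp add: y_def)
  moreover have False if "k = Suc k1" "g ! k1 = N" for k1
  proof -
    have "y = Suc (cntN (take k1 g))" "cntE (take k g) = cntE (take k1 g)"
      using cnt_take_Suc_N[of k1 g] that k(1) by (simp_all add: y_def)
    then show False
      using calculation east_upto_at_north_step[of k1 g] that k(1) by simp
  qed
  ultimately show ?thesis by (cases k) (auto intro: step.exhaust)
qed

lemma ldist_next_return:
  assumes ab: "above g \<nu>" and k: "k < length g" "g ! k = N"
  shows "\<exists>k'. k < k' \<and> k' \<le> length g \<and> ldist \<nu> (pt g k') = ldist \<nu> (pt g k) \<and>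
           (\<forall>m. k < m \<and> m < k' \<longrightarrow> ldist \<nu> (pt g m) \<noteq> ldist \<nu> (pt g k))"
proof -
  define L where "L m = ldist \<nu> (pt g m)" for m
  have cn: "cntN g = cntN \<nu>" using ab by (simp add: above_def endpt_def)
  have "0 \<le> L k"
    using gap_nonneg[OF ab, of "cntN (take k g)"] gap_at_north_step[OF cn k] by (simp add: L_def)
  then have "\<exists>m. Suc k \<le> m \<and> m \<le> length g \<and> L m = L k"
    using int_unit_descent_hits[of "Suc k" "length g" "L k" L] k ldist_pt_Suc_N[OF cn k]
      ldist_pt_Suc_ge[OF cn] ldist_pt_end[of g \<nu>] ab by (simp add: L_def above_def)
  then obtain m where "Suc k \<le> m" "m \<le> length g" "L m = L k" by blast
  define P where "P m \<longleftrightarrow> k < m \<and> m \<le> length g \<and> L m = L k" for m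
  have "P m" using \<open>Suc k \<le> m\<close> \<open>m \<le> length g\<close> \<open>L m = L k\<close> by (simp add: P_def)
  then obtain k' where "P k'" and k'_min: "\<And>m. m < k' \<Longrightarrow> \<not> P m"
    by (rule obtain_least) blast
  moreover have "L m \<noteq> L k" if "k < m" "m < k'" for m
    using k'_min[OF that(2)] that \<open>P k'\<close> by (simp add: P_def)
  ultimately show ?thesis unfolding P_def L_def by blast
qed

lemma tam_step_at_row:
  assumes ab: "above g \<nu>" and y: "y < cntN g" and row: "0 < east_at g y"
  shows "\<exists>g' y'. tam_step \<nu> g g' \<and> profile_push (gap \<nu> g) y y' (gap \<nu> g')"
proof -
  have cn: "cntN g = cntN \<nu>" using ab by (simp add: above_def endpt_def)
  obtain k where k: "k < length g" "g ! k = N" "cntN (take k g) = y"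
    using north_step_at_height[OF y] by blast
  have kE: "0 < k" "g ! (k - 1) = E" using east_before_north_step[of k g] k row by auto
  obtain k' where k': "k < k'" "k' \<le> length g" "ldist \<nu> (pt g k') = ldist \<nu> (pt g k)"
      and first: "\<forall>m. k < m \<and> m < k' \<longrightarrow> ldist \<nu> (pt g m) \<noteq> ldist \<nu> (pt g k)"
    using ldist_next_return[OF ab k(1,2)] by blast
  have "tam_step \<nu> g (push_word g k k')"
    unfolding tam_step_def Wset_def using ab k kE k' first by blast
  moreover have "profile_push (gap \<nu> g) y (cntN (take k' g)) (gap \<nu> (push_word g k k'))"
    using push_word_profile_push[OF cn kE(1) k(1) kE(2) k(2) k'] first k(3) by simp
  ultimately show ?thesis by blast
qed

section \<open>Z-patterns of gap profiles\<close>

text \<open>The Z-pattern of the arc diagram of \<open>(lo, mid, up)\<close>, read on the profiles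
  \<open>f = gap lo mid\<close> and \<open>g = gap lo up\<close> (so that \<open>g - f\<close> is the gap between \<open>up\<close> and \<open>mid\<close>).\<close>
definition profile_Z :: "(nat \<Rightarrow> int) \<Rightarrow> (nat \<Rightarrow> int) \<Rightarrow> bool" where
  "profile_Z f g \<longleftrightarrow> (\<exists>r t. r < t \<and> f r < f t \<and> (\<forall>s. r \<le> s \<and> s < t \<longrightarrow> g t - f t < g s - f s))"

lemma profile_ZI:
  "r < t \<Longrightarrow> f r < f t \<Longrightarrow> (\<And>s. r \<le> s \<Longrightarrow> s < t \<Longrightarrow> g t - f t < g s - f s) \<Longrightarrow> profile_Z f g"
  unfolding profile_Z_def by blast

lemma not_profile_Z_self: "\<not> profile_Z f f"
  unfolding profile_Z_def by auto

lemma profile_pushD: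
  assumes "profile_push f y y' f'"
  shows "y < y'" "f y' \<le> f y" "\<And>s. y \<le> s \<Longrightarrow> s < y' \<Longrightarrow> f y \<le> f s"
    and "\<And>s. y < s \<Longrightarrow> s < y' \<Longrightarrow> f y < f s"
    and "\<And>s. f' s = (if y \<le> s \<and> s < y' then f s + 1 else f s)"
  using assms unfolding profile_push_def by (auto simp: le_less)

text \<open>A push only lowers \<open>g - f\<close> on a window \<open>[y, y')\<close> lying inside \<open>(r, t)\<close>; if this creates a
  new minimum \<open>ss\<close> of \<open>g - f\<close> below the level at \<open>t\<close>, then \<open>(r, ss)\<close> witnesses the Z-pattern.\<close>
lemma profile_Z_push_window:
  assumes push: "profile_push f y y' f'" and rt: "r < y" "y' \<le> t" "f r \<le> f y"
    and D: "\<And>s. r \<le> s \<Longrightarrow> s < t \<Longrightarrow> g t - f t < g s - f s"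
    and dip: "y \<le> s" "s < y'" "g s - f s - 1 \<le> g t - f t"
  shows "profile_Z f' g"
proof -
  note p = profile_pushD[OF push]
  define P where "P s \<longleftrightarrow> y \<le> s \<and> s < y' \<and> g s - f s - 1 \<le> g t - f t" for s
  have "P s" using dip by (simp add: P_def)
  then obtain ss where "P ss" and ss_min: "\<And>s. s < ss \<Longrightarrow> \<not> P s"
    by (rule obtain_least) blast
  then have ss: "y \<le> ss" "ss < y'" "g ss - f ss - 1 \<le> g t - f t" by (simp_all add: P_def)
  show ?thesis
  proof (rule profile_ZI[of r ss])
    show "r < ss" using rt ss by simp
    show "f' r < f' ss" using rt ss p(3)[of ss] p(5)[of r] p(5)[of ss] by simp
    show "g ss - f' ss < g s - f' s" if "r \<le> s" "s < ss" for s
      using that ss ss_min[of s] D[of s] rt p(5)[of s] p(5)[of ss] by (auto simp: P_def)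
  qed
qed

lemma profile_Z_push:
  assumes Z: "profile_Z f g" and push: "profile_push f y y' f'"
  shows "profile_Z f' g"
proof -
  obtain r t where rt: "r < t" "f r < f t"
    and D: "\<And>s. r \<le> s \<Longrightarrow> s < t \<Longrightarrow> g t - f t < g s - f s"
    using Z unfolding profile_Z_def by blast
  note p = profile_pushD[OF push]
  define I where "I s \<longleftrightarrow> y \<le> s \<and> s < y'" for s
  have f': "f' s = (if I s then f s + 1 else f s)" for s using p(5) by (simp add: I_def)
  have same_t: "profile_Z f' g" if ends: "\<not> I r \<or> I t"
    and window: "\<And>s. r \<le> s \<Longrightarrow> s < t \<Longrightarrow> I s \<Longrightarrow> \<not> I t \<Longrightarrow> g t - f t < g s - f s - 1"
  proof (rule profile_ZI[of r t])
    show "r < t" "f' r < f' t" using rt ends f'[of r] f'[of t] by auto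
    show "g t - f' t < g s - f' s" if "r \<le> s" "s < t" for s
      using D[OF that] window[OF that] f'[of s] f'[of t] by (auto split: if_splits)
  qed
  have from_y': "profile_Z f' g" if "r \<le> y'" "y' < t" "f y' < f t" "\<not> I t"
    by (rule profile_ZI[of y' t]) (use that D f' in \<open>auto simp: I_def\<close>)
  show ?thesis
  proof (cases "I t \<or> \<not> (\<exists>s. r \<le> s \<and> s < t \<and> I s)")
    case True
    moreover have "\<not> I r \<or> I t" using True rt(1) by blast
    ultimately show ?thesis by (intro same_t) auto
  next
    case False
    then obtain s0 where "\<not> I t" "r \<le> s0" "s0 < t" "I s0" by blast
    then have y't: "y' \<le> t" and ry': "r < y'" by (auto simp: I_def)
    consider (r_in) "I r" | (r_low) "f y < f r" "\<not> I r" | (r_high) "f r \<le> f y" "\<not> I r"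
      by linarith
    then show ?thesis
    proof cases
      case r_in
      then show ?thesis
        using from_y' y't ry' rt p(2) p(3)[of r] \<open>\<not> I t\<close> by (fastforce simp: I_def)
    next
      case r_low
      then show ?thesis
        using from_y' y't ry' rt p(2) \<open>\<not> I t\<close> by fastforce
    next
      case r_high
      then have "r < y" using ry' by (auto simp: I_def)
      show ?thesis
      proof (cases "\<exists>s. I s \<and> g s - f s - 1 \<le> g t - f t")
        case True
        then show ?thesis
          using profile_Z_push_window[OF push \<open>r < y\<close> y't r_high(1) D] by (auto simp: I_def)
      next
        case False
        then show ?thesis using r_high by (intro same_t) auto
      qed
    qed
  qed
qed

lemma profile_push_stays_below:
  assumes noZ: "\<not> profile_Z f g" and le: "\<And>r. f r \<le> g r" and lt: "f y < g y"
    and push: "profile_push f y y' f'"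
  shows "f' r \<le> g r"
proof -
  have strict: "f s < g s" if "y \<le> s" "s < y'" for s
  proof (rule ccontr)
    assume "\<not> f s < g s"
    define P where "P s \<longleftrightarrow> y \<le> s \<and> s < y' \<and> g s \<le> f s" for s
    have "P s" using that \<open>\<not> f s < g s\<close> by (simp add: P_def)
    then obtain s1 where "P s1" and s1_min: "\<And>m. m < s1 \<Longrightarrow> \<not> P m"
      by (rule obtain_least) blast
    then have s1: "y \<le> s1" "s1 < y'" "g s1 \<le> f s1" by (simp_all add: P_def)
    have "y < s1" using s1 lt by (cases "s1 = y") auto
    have "profile_Z f g"
    proof (rule profile_ZI[of y s1])
      show "y < s1" "f y < f s1" using \<open>y < s1\<close> s1 profile_pushD(4)[OF push] by auto
      show "g s1 - f s1 < g s - f s" if "y \<le> s" "s < s1" for s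
        using s1_min[of s] that s1 le[of s1] by (auto simp: P_def)
    qed
    then show False using noZ by simp
  qed
  show ?thesis
  proof (cases "y \<le> r \<and> r < y'")
    case True
    then show ?thesis using strict[of r] profile_pushD(5)[OF push, of r] by simp
  next
    case False
    then show ?thesis using le[of r] profile_pushD(5)[OF push, of r] by auto
  qed
qed

lemma profile_push_keeps_no_Z:
  assumes noZ: "\<not> profile_Z f g" and below: "\<And>r. r < y \<Longrightarrow> f r = g r"
    and le': "\<And>r. f' r \<le> g r" and push: "profile_push f y y' f'"
  shows "\<not> profile_Z f' g"
proof
  assume "profile_Z f' g"
  then obtain r t where rt: "r < t" "f' r < f' t"
    and D: "\<And>s. r \<le> s \<Longrightarrow> s < t \<Longrightarrow> g t - f' t < g s - f' s"
    unfolding profile_Z_def by blast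
  define I where "I s \<longleftrightarrow> y \<le> s \<and> s < y'" for s
  have f': "f' s = (if I s then f s + 1 else f s)" for s
    using profile_pushD(5)[OF push] by (simp add: I_def)
  have "profile_Z f g"
  proof (cases "I t \<longrightarrow> y \<le> r")
    case True
    then have "I t \<Longrightarrow> r \<le> s \<Longrightarrow> s \<le> t \<Longrightarrow> I s" for s by (auto simp: I_def)
    then show ?thesis
      using rt D f' by (intro profile_ZI[of r t]) (fastforce split: if_splits)+
  next
    case False
    then have "f' r = g r" using below[of r] f'[of r] by (auto simp: I_def)
    then show ?thesis using D[of r] rt le'[of t] by simp
  qed
  then show False using noZ by simp
qed

lemma tam_le_not_profile_Z:
  assumes "tam_le \<nu> g g'"
  shows "\<not> profile_Z (gap \<nu> g) (gap \<nu> g')"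
  using assms[unfolded tam_le_def]
proof (induction rule: converse_rtranclp_induct)
  case (step g g'')
  then obtain y y' where "profile_push (gap \<nu> g) y y' (gap \<nu> g'')"
    using tam_step_profile_push by blast
  then show ?case using step.IH profile_Z_push by blast
qed (rule not_profile_Z_self)

lemma first_row_of_difference:
  assumes "above u m" "m \<noteq> u"
  obtains y where "y < cntN m" "0 < east_at m y" "east_upto u y < east_upto m y"
    "\<And>r. r < y \<Longrightarrow> east_upto u r = east_upto m r"
proof -
  have le: "east_upto u r \<le> east_upto m r" and cnt: "cntN u = cntN m" "cntE u = cntE m" for r
    using assms(1) by (auto simp: above_iff_east_upto endpt_def)
  have "\<exists>r. east_upto u r < east_upto m r"
  proof (rule ccontr)
    assume "\<nexists>r. east_upto u r < east_upto m r"
    then have "\<forall>r. east_upto m r = east_upto u r" using le by (simp add: not_less eq_iff)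
    then show False using east_upto_inject[of m u] cnt(1) assms(2) by simp
  qed
  then obtain r0 where "east_upto u r0 < east_upto m r0" by blast
  then obtain y where y: "east_upto u y < east_upto m y"
    and y_min: "\<And>r. r < y \<Longrightarrow> \<not> east_upto u r < east_upto m r"
    by (rule obtain_least[where P = "\<lambda>r. east_upto u r < east_upto m r"]) blast
  have below: "east_upto u r = east_upto m r" if "r < y" for r
    using y_min[OF that] le[of r] by simp
  have "y < cntN m"
  proof (rule ccontr)
    assume "\<not> y < cntN m"
    then show False using y cnt east_upto_top[of m y] east_upto_top[of u y] by simp
  qed
  moreover have "0 < east_at m y"
  proof (cases y)
    case (Suc y')
    then show ?thesis
      using y below[of y'] east_at_plus_east_upto_below[of m y] east_at_plus_east_upto_below[of u y]
      by simp
  qed (use y east_at_plus_east_upto_below[of m y] in simp)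
  ultimately show ?thesis using that y below by blast
qed

lemma not_profile_Z_tam_le:
  assumes "\<not> profile_Z (gap \<nu> m) (gap \<nu> u)" "above m \<nu>" "above u m"
  shows "tam_le \<nu> m u"
  using assms
proof (induction "\<Sum>r<cntN \<nu>. east_upto m r - east_upto u r" arbitrary: m rule: less_induct)
  case less
  show ?case
  proof (cases "m = u")
    case False
    have m_le: "\<And>r. gap \<nu> m r \<le> gap \<nu> u r" and u_cnt: "endpt u = endpt m"
      using less.prems(3) by (auto simp: above_iff_east_upto gap_def)
    obtain y where y: "y < cntN m" "0 < east_at m y" "east_upto u y < east_upto m y"
      and below: "\<And>r. r < y \<Longrightarrow> east_upto u r = east_upto m r"
      using first_row_of_difference[OF less.prems(3) False] by blast
    obtain m' y' where step: "tam_step \<nu> m m'" and push: "profile_push (gap \<nu> m) y y' (gap \<nu> m')"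
      using tam_step_at_row[OF less.prems(2) y(1,2)] by blast
    have m'_le: "gap \<nu> m' r \<le> gap \<nu> u r" for r
      using profile_push_stays_below[OF less.prems(1) m_le _ push] y(3) by (simp add: gap_def)
    have "gap \<nu> m r = gap \<nu> u r" if "r < y" for r using below[OF that] by (simp add: gap_def)
    then have no_Z: "\<not> profile_Z (gap \<nu> m') (gap \<nu> u)"
      using profile_push_keeps_no_Z[OF less.prems(1) _ m'_le push] by blast
    have m'_m: "east_upto m' r \<le> east_upto m r" for r
      using profile_pushD(5)[OF push, of r] by (auto simp: gap_def split: if_splits)
    have m'_y: "east_upto m' y < east_upto m y"
      using profile_pushD(1)[OF push] profile_pushD(5)[OF push, of y] by (simp add: gap_def)
    have u_m': "east_upto u r \<le> east_upto m' r" for r using m'_le[of r] by (simp add: gap_def)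
    have "endpt m' = endpt m" using tam_step_endpt[OF step] .
    then have "above m' \<nu>" "above u m'"
      using less.prems(2) m'_m u_m' u_cnt by (auto simp: above_iff_east_upto intro: le_trans)
    moreover have "(\<Sum>r<cntN \<nu>. east_upto m' r - east_upto u r) < (\<Sum>r<cntN \<nu>. east_upto m r - east_upto u r)"
    proof (rule sum_strict_mono_ex1)
      show "\<forall>r\<in>{..<cntN \<nu>}. east_upto m' r - east_upto u r \<le> east_upto m r - east_upto u r"
        using m'_m by (simp add: diff_le_mono)
      show "\<exists>r\<in>{..<cntN \<nu>}. east_upto m' r - east_upto u r < east_upto m r - east_upto u r"
        using m'_y u_m'[of y] y(1) less.prems(2) by (intro bexI[of _ y]) (auto simp: above_def endpt_def)
    qed simp
    ultimately have "tam_le \<nu> m' u" using less.hyps no_Z by blast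
    then show ?thesis using step unfolding tam_le_def by (simp add: converse_rtranclp_into_rtranclp)
  qed (simp add: tam_le_def)
qed

section \<open>Non-crossing matchings\<close>

definition balance :: "colour list \<Rightarrow> colour \<Rightarrow> colour \<Rightarrow> nat \<Rightarrow> int" where
  "balance cs L R x =
     int (length (filter (\<lambda>c. c = L) (take x cs))) - int (length (filter (\<lambda>c. c = R) (take x cs)))"

definition dyck_word :: "colour list \<Rightarrow> colour \<Rightarrow> colour \<Rightarrow> bool" where
  "dyck_word cs L R \<longleftrightarrow> (\<forall>x \<le> length cs. 0 \<le> balance cs L R x) \<and> balance cs L R (length cs) = 0"

text \<open>The first-return matching of a Dyck word.\<close>
definition canonical_arcs :: "colour list \<Rightarrow> colour \<Rightarrow> colour \<Rightarrow> (nat \<times> nat) set" where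
  "canonical_arcs cs L R = {(a, b). a < b \<and> b < length cs \<and> cs ! a = L \<and>
     balance cs L R (Suc b) = balance cs L R a \<and>
     (\<forall>x. a < x \<and> x \<le> b \<longrightarrow> balance cs L R a < balance cs L R x)}"

lemma balance_0 [simp]: "balance cs L R 0 = 0"
  by (simp add: balance_def)

lemma balance_Suc:
  assumes "x < length cs" "L \<noteq> R"
  shows "balance cs L R (Suc x) =
    balance cs L R x + (if cs ! x = L then 1 else if cs ! x = R then -1 else 0)"
  using assms by (simp add: balance_def take_Suc_conv_app_nth)

lemma count_take_eq_card:
  "x \<le> length cs \<Longrightarrow> length (filter (\<lambda>c. c = col) (take x cs)) = card {p. p < x \<and> cs ! p = col}"
  by (simp add: length_filter_conv_card min_absorb2) (metis (lifting) nth_take)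

lemma balance_diff:
  assumes "x \<le> y" "y \<le> length cs"
  shows "balance cs L R y - balance cs L R x =
     int (card {p. x \<le> p \<and> p < y \<and> cs ! p = L}) - int (card {p. x \<le> p \<and> p < y \<and> cs ! p = R})"
proof -
  have split: "card {p. p < y \<and> P p} = card {p. p < x \<and> P p} + card {p. x \<le> p \<and> p < y \<and> P p}"
    for P
  proof -
    have "{p. p < y \<and> P p} = {p. p < x \<and> P p} \<union> {p. x \<le> p \<and> p < y \<and> P p}" using assms by auto
    moreover have "finite {p. x \<le> p \<and> p < y \<and> P p}" by (rule finite_subset[of _ "{..<y}"]) auto
    ultimately show ?thesis by (simp add: card_Un_disjoint disjoint_iff)
  qed
  show ?thesis
    using assms
    by (simp add: balance_def count_take_eq_card split[of "\<lambda>p. cs ! p = L"] split[of "\<lambda>p. cs ! p = R"])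
qed

lemma canonical_arc_colours:
  assumes "(a, b) \<in> canonical_arcs cs L R" "L \<noteq> R"
  shows "a < b \<and> b < length cs \<and> cs ! a = L \<and> cs ! b = R"
proof -
  have "a < b" "b < length cs" "cs ! a = L" "balance cs L R (Suc b) = balance cs L R a"
    "balance cs L R a < balance cs L R b"
    using assms(1) unfolding canonical_arcs_def by auto
  then show ?thesis using balance_Suc[of b cs L R] assms(2) by (auto split: if_splits)
qed

lemma canonical_arcs_right_unique:
  assumes "(a, b) \<in> canonical_arcs cs L R" "(a, b') \<in> canonical_arcs cs L R"
  shows "b = b'"
proof -
  have "\<not> b < b'" if "(a, b) \<in> canonical_arcs cs L R" "(a, b') \<in> canonical_arcs cs L R" for b b'
    using that unfolding canonical_arcs_def by (force dest: spec[of _ "Suc b"])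
  then show ?thesis using assms by (meson linorder_neqE_nat)
qed

lemma canonical_arcs_left_unique:
  assumes "(a, b) \<in> canonical_arcs cs L R" "(a', b) \<in> canonical_arcs cs L R"
  shows "a = a'"
proof -
  have "\<not> a < a'" if "(a, b) \<in> canonical_arcs cs L R" "(a', b) \<in> canonical_arcs cs L R" for a a'
    using that unfolding canonical_arcs_def by (force dest: spec[of _ a'])
  then show ?thesis using assms by (meson linorder_neqE_nat)
qed

lemma canonical_arcs_noncrossing:
  assumes "(a, b) \<in> canonical_arcs cs L R" "(c, d) \<in> canonical_arcs cs L R"
  shows "\<not> (a < c \<and> c < b \<and> b < d)"
  using assms unfolding canonical_arcs_def by (force dest: spec[of _ c] spec[of _ "Suc b"])

lemma canonical_arc_from_left:
  assumes LR: "L \<noteq> R" and dyck: "dyck_word cs L R" and d: "d < length cs" "cs ! d = L"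
  shows "\<exists>b. (d, b) \<in> canonical_arcs cs L R"
proof -
  let ?H = "balance cs L R"
  define P where "P x \<longleftrightarrow> Suc d < x \<and> x \<le> length cs \<and> ?H x \<le> ?H d" for x
  have up: "?H (Suc d) = ?H d + 1" using balance_Suc[OF d(1) LR] d(2) by simp
  have "?H (length cs) = 0" "0 \<le> ?H d" using dyck d unfolding dyck_word_def by auto
  with up d have "P (length cs)" unfolding P_def by (metis Suc_lessI add_le_same_cancel1 not_one_le_zero order_refl)
  then obtain x where "P x" and x_min: "\<And>z. z < x \<Longrightarrow> \<not> P z"
    by (rule obtain_least) blast
  then obtain b where x: "x = Suc b" "d < b" "b < length cs" "?H (Suc b) \<le> ?H d"
    unfolding P_def by (cases x) auto
  have above: "?H d < ?H z" if "d < z" "z \<le> b" for z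
  proof (cases "z = Suc d")
    case False
    then show ?thesis using x_min[of z] that x unfolding P_def by auto
  qed (use up in simp)
  have "?H (Suc b) = ?H d"
    using above[of b] x balance_Suc[OF x(3) LR] by (simp split: if_splits)
  then have "(d, b) \<in> canonical_arcs cs L R"
    unfolding canonical_arcs_def using x d above by auto
  then show ?thesis by blast
qed

lemma canonical_arc_to_right:
  assumes LR: "L \<noteq> R" and dyck: "dyck_word cs L R" and d: "d < length cs" "cs ! d = R"
  shows "\<exists>a. (a, d) \<in> canonical_arcs cs L R"
proof -
  let ?H = "balance cs L R"
  let ?P = "\<lambda>x. x \<le> d \<and> ?H x \<le> ?H (Suc d)"
  have down: "?H (Suc d) = ?H d - 1" using balance_Suc[OF d(1) LR] d(2) LR by simp
  have "?P 0" using dyck d unfolding dyck_word_def by auto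
  define a where "a = (GREATEST x. ?P x)"
  have a: "a \<le> d" "?H a \<le> ?H (Suc d)"
    using GreatestI_ex_nat[of ?P d] \<open>?P 0\<close> a_def by blast+
  have a_max: "?H (Suc d) < ?H z" if "a < z" "z \<le> d" for z
    using Greatest_le_nat[of ?P z d] that a_def by fastforce
  have "a < d" using a a_max[of d] down by (cases "a = d") auto
  moreover have "?H (Suc d) < ?H (Suc a)" using a_max[of "Suc a"] \<open>a < d\<close> by simp
  moreover have "a < length cs" using \<open>a < d\<close> d by simp
  ultimately have "cs ! a = L" "?H a = ?H (Suc d)"
    using balance_Suc[of a cs L R] LR a by (auto split: if_splits)
  then have "(a, d) \<in> canonical_arcs cs L R"
    unfolding canonical_arcs_def using \<open>a < d\<close> d a_max by auto
  then show ?thesis by blast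
qed

lemma nc_matching_canonical_arcs:
  assumes LR: "L \<noteq> R" and dyck: "dyck_word cs L R"
  shows "nc_matching cs L R (canonical_arcs cs L R)"
proof -
  let ?M = "canonical_arcs cs L R"
  let ?touching = "\<lambda>d. {e \<in> ?M. fst e = d \<or> snd e = d}"
  have touch_L: "?touching d = {(d, b)}" if "cs ! d = L" "(d, b) \<in> ?M" for d b
  proof (intro equalityI subsetI)
    fix e assume "e \<in> ?touching d"
    then obtain a' b' where e: "e = (a', b')" "(a', b') \<in> ?M" "a' = d \<or> b' = d" by (cases e) auto
    then have "a' = d" using canonical_arc_colours[OF e(2) LR] that(1) LR by auto
    then show "e \<in> {(d, b)}" using e canonical_arcs_right_unique[OF that(2)] by auto
  qed (use that in auto)
  have touch_R: "?touching d = {(a, d)}" if "cs ! d = R" "(a, d) \<in> ?M" for a d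
  proof (intro equalityI subsetI)
    fix e assume "e \<in> ?touching d"
    then obtain a' b' where e: "e = (a', b')" "(a', b') \<in> ?M" "a' = d \<or> b' = d" by (cases e) auto
    then have "b' = d" using canonical_arc_colours[OF e(2) LR] that(1) LR by auto
    then show "e \<in> {(a, d)}" using e canonical_arcs_left_unique[OF that(2)] by auto
  qed (use that in auto)
  have "card (?touching d) = 1" if d: "d < length cs" "cs ! d = L \<or> cs ! d = R" for d
  proof (cases "cs ! d = L")
    case True
    then obtain b where "(d, b) \<in> ?M" using canonical_arc_from_left[OF LR dyck d(1)] by blast
    then show ?thesis using touch_L True by simp
  next
    case False
    then have "cs ! d = R" using d(2) by simp
    moreover obtain a where "(a, d) \<in> ?M" using canonical_arc_to_right[OF LR dyck d(1)] calculation by blast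
    ultimately show ?thesis using touch_R by simp
  qed
  moreover have "\<forall>(a, b) \<in> ?M. a < b \<and> b < length cs \<and> cs ! a = L \<and> cs ! b = R"
    using canonical_arc_colours[OF _ LR] by blast
  moreover have "\<forall>(a, b) \<in> ?M. \<forall>(c, d) \<in> ?M. \<not> (a < c \<and> c < b \<and> b < d)"
    using canonical_arcs_noncrossing by blast
  ultimately show ?thesis unfolding nc_matching_def by blast
qed

lemma nc_matching_arc:
  assumes "nc_matching cs L R M" "(a, b) \<in> M"
  shows "a < b \<and> b < length cs \<and> cs ! a = L \<and> cs ! b = R"
  using assms unfolding nc_matching_def by fast

lemma nc_matching_noncrossing:
  assumes "nc_matching cs L R M" "(a, b) \<in> M" "(c, d) \<in> M"
  shows "\<not> (a < c \<and> c < b \<and> b < d)"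
  using assms unfolding nc_matching_def by fast

lemma nc_matching_touching_unique:
  assumes "nc_matching cs L R M" "d < length cs" "cs ! d = L \<or> cs ! d = R"
    and "e1 \<in> M" "fst e1 = d \<or> snd e1 = d" "e2 \<in> M" "fst e2 = d \<or> snd e2 = d"
  shows "e1 = e2"
proof -
  have "card {e \<in> M. fst e = d \<or> snd e = d} = 1"
    using assms(1-3) unfolding nc_matching_def by blast
  then obtain e where e: "{e \<in> M. fst e = d \<or> snd e = d} = {e}" by (rule card_1_singletonE)
  have "e1 \<in> {e \<in> M. fst e = d \<or> snd e = d}" "e2 \<in> {e \<in> M. fst e = d \<or> snd e = d}"
    using assms(4-7) by simp_all
  then show ?thesis unfolding e by simp
qed

lemma nc_matching_touching_exists:
  assumes "nc_matching cs L R M" "d < length cs" "cs ! d = L \<or> cs ! d = R"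
  obtains q p where "(q, p) \<in> M" "q = d \<or> p = d"
proof -
  have "card {e \<in> M. fst e = d \<or> snd e = d} = 1"
    using assms unfolding nc_matching_def by blast
  then have "{e \<in> M. fst e = d \<or> snd e = d} \<noteq> {}" by (metis card.empty zero_neq_one)
  then show ?thesis using that by auto
qed

lemma nc_matching_left_unique:
  assumes nc: "nc_matching cs L R M" and "(q, p) \<in> M" "(q', p) \<in> M"
  shows "q = q'"
  using nc_matching_touching_unique[OF nc, of p "(q, p)" "(q', p)"] nc_matching_arc[OF nc assms(2)] assms
  by simp

lemma nc_matching_right_unique:
  assumes nc: "nc_matching cs L R M" and "(q, p) \<in> M" "(q, p') \<in> M"
  shows "p = p'"
  using nc_matching_touching_unique[OF nc, of q "(q, p)" "(q, p')"] nc_matching_arc[OF nc assms(2)] assms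
  by simp

lemma nc_matching_card_ends:
  assumes nc: "nc_matching cs L R M" and "S \<subseteq> M"
  shows "card (fst ` S) = card (snd ` S)"
proof -
  have "inj_on fst S"
  proof (rule inj_onI)
    fix e1 e2 assume e: "e1 \<in> S" "e2 \<in> S" "fst e1 = fst e2"
    then have "e1 \<in> M" "e2 \<in> M" using assms(2) by auto
    then have "(fst e1, snd e1) \<in> M" "(fst e1, snd e2) \<in> M" by (simp, simp add: e(3))
    then show "e1 = e2" using nc_matching_right_unique[OF nc] e(3) by (simp add: prod_eq_iff)
  qed
  moreover have "inj_on snd S"
  proof (rule inj_onI)
    fix e1 e2 assume e: "e1 \<in> S" "e2 \<in> S" "snd e1 = snd e2"
    then have "e1 \<in> M" "e2 \<in> M" using assms(2) by auto
    then have "(fst e1, snd e1) \<in> M" "(fst e2, snd e1) \<in> M" by (simp, simp add: e(3))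
    then show "e1 = e2" using nc_matching_left_unique[OF nc] e(3) by (simp add: prod_eq_iff)
  qed
  ultimately show ?thesis by (simp add: card_image)
qed

lemma nc_matching_partner:
  assumes nc: "nc_matching cs L R M" and LR: "L \<noteq> R" and d: "d < length cs"
  shows "cs ! d = L \<Longrightarrow> \<exists>p. (d, p) \<in> M" and "cs ! d = R \<Longrightarrow> \<exists>q. (q, d) \<in> M"
  using nc_matching_touching_exists[OF nc d] nc_matching_arc[OF nc] LR by metis+

lemma nc_matching_inner_R_le_L:
  assumes nc: "nc_matching cs L R M" and LR: "L \<noteq> R" and ab: "(a, b) \<in> M" and x: "x \<le> b"
  shows "card {p. a < p \<and> p < x \<and> cs ! p = R} \<le> card {q. a < q \<and> q < x \<and> cs ! q = L}"
proof -
  define S where "S = {e \<in> M. a < snd e \<and> snd e < x}"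
  have b: "b < length cs" using nc_matching_arc[OF nc ab] by simp
  have "{p. a < p \<and> p < x \<and> cs ! p = R} = snd ` S"
  proof (intro equalityI subsetI)
    fix p assume p: "p \<in> {p. a < p \<and> p < x \<and> cs ! p = R}"
    then obtain q where "(q, p) \<in> M" using nc_matching_partner(2)[OF nc LR, of p] x b by auto
    then show "p \<in> snd ` S" using p unfolding S_def by (simp add: image_iff) (metis fst_conv snd_conv)
  next
    fix p assume "p \<in> snd ` S"
    then show "p \<in> {p. a < p \<and> p < x \<and> cs ! p = R}"
      using nc_matching_arc[OF nc, of _ p] unfolding S_def by auto
  qed
  also have "card (snd ` S) = card (fst ` S)" using nc_matching_card_ends[OF nc] by (simp add: S_def)
  also have "fst ` S \<subseteq> {q. a < q \<and> q < x \<and> cs ! q = L}"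
  proof
    fix q assume "q \<in> fst ` S"
    then obtain p where qp: "(q, p) \<in> M" "a < p" "p < x" unfolding S_def by auto
    have "q \<noteq> a" using nc_matching_right_unique[OF nc ab, of p] qp x by auto
    moreover have "\<not> q < a" using nc_matching_noncrossing[OF nc qp(1) ab] qp x by simp
    ultimately show "q \<in> {q. a < q \<and> q < x \<and> cs ! q = L}"
      using nc_matching_arc[OF nc qp(1)] qp by auto
  qed
  then have "card (fst ` S) \<le> card {q. a < q \<and> q < x \<and> cs ! q = L}"
    by (rule card_mono[rotated]) simp
  finally show ?thesis .
qed

lemma nc_matching_inner_L_le_R:
  assumes nc: "nc_matching cs L R M" and LR: "L \<noteq> R" and ab: "(a, b) \<in> M"
  shows "card {q. a < q \<and> q < b \<and> cs ! q = L} \<le> card {p. a < p \<and> p < b \<and> cs ! p = R}"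
proof -
  define S where "S = {e \<in> M. a < fst e \<and> fst e < b}"
  have b: "b < length cs" using nc_matching_arc[OF nc ab] by simp
  have "{q. a < q \<and> q < b \<and> cs ! q = L} = fst ` S"
  proof (intro equalityI subsetI)
    fix q assume q: "q \<in> {q. a < q \<and> q < b \<and> cs ! q = L}"
    then obtain p where "(q, p) \<in> M" using nc_matching_partner(1)[OF nc LR, of q] b by auto
    then show "q \<in> fst ` S" using q unfolding S_def by (simp add: image_iff) (metis fst_conv snd_conv)
  next
    fix q assume "q \<in> fst ` S"
    then show "q \<in> {q. a < q \<and> q < b \<and> cs ! q = L}"
      using nc_matching_arc[OF nc, of q] unfolding S_def by auto
  qed
  also have "card (fst ` S) = card (snd ` S)" using nc_matching_card_ends[OF nc] by (simp add: S_def)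
  also have "snd ` S \<subseteq> {p. a < p \<and> p < b \<and> cs ! p = R}"
  proof
    fix p assume "p \<in> snd ` S"
    then obtain q where qp: "(q, p) \<in> M" "a < q" "q < b" unfolding S_def by auto
    have "p \<noteq> b" using nc_matching_left_unique[OF nc ab, of q] qp by auto
    moreover have "\<not> b < p" using nc_matching_noncrossing[OF nc ab qp(1)] qp by simp
    ultimately show "p \<in> {p. a < p \<and> p < b \<and> cs ! p = R}"
      using nc_matching_arc[OF nc qp(1)] qp by auto
  qed
  then have "card (snd ` S) \<le> card {p. a < p \<and> p < b \<and> cs ! p = R}"
    by (rule card_mono[rotated]) simp
  finally show ?thesis .
qed

lemma nc_matching_subset_canonical:
  assumes nc: "nc_matching cs L R M" and LR: "L \<noteq> R" and ab: "(a, b) \<in> M"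
  shows "(a, b) \<in> canonical_arcs cs L R"
proof -
  have arc: "a < b" "b < length cs" "cs ! a = L" "cs ! b = R" using nc_matching_arc[OF nc ab] by auto
  let ?inner = "\<lambda>x col. card {p. a < p \<and> p < x \<and> cs ! p = col}"
  have diff: "balance cs L R x - balance cs L R a = 1 + int (?inner x L) - int (?inner x R)"
    if "a < x" "x \<le> length cs" for x
  proof -
    have "{p. a \<le> p \<and> p < x \<and> cs ! p = L} = insert a {p. a < p \<and> p < x \<and> cs ! p = L}"
      "{p. a \<le> p \<and> p < x \<and> cs ! p = R} = {p. a < p \<and> p < x \<and> cs ! p = R}"
      using that arc LR by (auto simp: le_less)
    then show ?thesis using balance_diff[of a x cs L R] that by simp
  qed
  have "balance cs L R a < balance cs L R x" if "a < x" "x \<le> b" for x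
    using diff[of x] nc_matching_inner_R_le_L[OF nc LR ab, of x] that arc by simp
  moreover have "balance cs L R (Suc b) = balance cs L R a"
  proof -
    have "{p. a < p \<and> p < Suc b \<and> cs ! p = L} = {p. a < p \<and> p < b \<and> cs ! p = L}"
      "{p. a < p \<and> p < Suc b \<and> cs ! p = R} = insert b {p. a < p \<and> p < b \<and> cs ! p = R}"
      using arc LR by (auto simp: less_Suc_eq)
    then show ?thesis
      using diff[of "Suc b"] arc nc_matching_inner_R_le_L[OF nc LR ab order_refl]
        nc_matching_inner_L_le_R[OF nc LR ab] by simp
  qed
  ultimately show ?thesis unfolding canonical_arcs_def using arc by auto
qed

lemma the_nc_matching:
  assumes LR: "L \<noteq> R" and dyck: "dyck_word cs L R"
  shows "(THE M. nc_matching cs L R M) = canonical_arcs cs L R"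
proof (rule the_equality)
  show "nc_matching cs L R (canonical_arcs cs L R)" using nc_matching_canonical_arcs[OF LR dyck] .
next
  fix M assume nc: "nc_matching cs L R M"
  show "M = canonical_arcs cs L R"
  proof (intro equalityI subsetI)
    fix e assume "e \<in> M"
    then show "e \<in> canonical_arcs cs L R"
      using nc_matching_subset_canonical[OF nc LR] by (cases e) auto
  next
    fix e assume e: "e \<in> canonical_arcs cs L R"
    obtain a b where ab: "e = (a, b)" by (cases e)
    then have "a < length cs" "cs ! a = L" using canonical_arc_colours[OF _ LR, of a b cs] e by auto
    then obtain b' where "(a, b') \<in> M" using nc_matching_partner(1)[OF nc LR] by blast
    then show "e \<in> M"
      using nc_matching_subset_canonical[OF nc LR] canonical_arcs_right_unique e ab by metis
  qed
qed

section \<open>Arc diagrams of triples of walks\<close>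

text \<open>The line of dots, built row by row from the numbers \<open>a\<close>, \<open>b\<close>, \<open>c\<close> of blue, black and red
  dots; \<open>excess a b s\<close> is the balance of blue over black dots before row \<open>s\<close>.\<close>
definition row_block :: "(nat \<Rightarrow> nat) \<Rightarrow> (nat \<Rightarrow> nat) \<Rightarrow> (nat \<Rightarrow> nat) \<Rightarrow> nat \<Rightarrow> colour list" where
  "row_block a b c r = replicate (a r) Blue @ replicate (b r) Black @ replicate (c r) Red"

definition row_word :: "(nat \<Rightarrow> nat) \<Rightarrow> (nat \<Rightarrow> nat) \<Rightarrow> (nat \<Rightarrow> nat) \<Rightarrow> nat \<Rightarrow> colour list" where
  "row_word a b c n = concat (map (row_block a b c) [0..<n])"

definition row_start :: "(nat \<Rightarrow> nat) \<Rightarrow> (nat \<Rightarrow> nat) \<Rightarrow> (nat \<Rightarrow> nat) \<Rightarrow> nat \<Rightarrow> nat" where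
  "row_start a b c s = (\<Sum>r<s. a r + b r + c r)"

definition excess :: "(nat \<Rightarrow> nat) \<Rightarrow> (nat \<Rightarrow> nat) \<Rightarrow> nat \<Rightarrow> int" where
  "excess a b s = (\<Sum>r<s. int (a r) - int (b r))"

lemma length_row_block[simp]: "length (row_block a b c r) = a r + b r + c r"
  by (simp add: row_block_def)

lemma row_word_Suc: "row_word a b c (Suc n) = row_word a b c n @ row_block a b c n"
  by (simp add: row_word_def)

lemma row_word_0[simp]: "row_word a b c 0 = []" by (simp add: row_word_def)

lemma row_start_Suc: "row_start a b c (Suc s) = row_start a b c s + (a s + b s + c s)"
  by (simp add: row_start_def)

lemma excess_Suc: "excess a b (Suc s) = excess a b s + int (a s) - int (b s)"
  by (simp add: excess_def)

lemma length_row_word: "length (row_word a b c n) = row_start a b c n"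
  by (induction n) (simp_all add: row_word_Suc row_start_Suc row_start_def)

lemma row_start_mono: "s \<le> s' \<Longrightarrow> row_start a b c s \<le> row_start a b c s'"
  unfolding row_start_def by (rule sum_mono2) auto

lemma row_word_prefix: "s \<le> n \<Longrightarrow> \<exists>rest. row_word a b c n = row_word a b c s @ rest"
proof (induction n)
  case 0 then show ?case by simp
next
  case (Suc n)
  show ?case
  proof (cases "s = Suc n")
    case True then show ?thesis by simp
  next
    case False
    then obtain rest where "row_word a b c n = row_word a b c s @ rest" using Suc by auto
    then show ?thesis by (simp add: row_word_Suc)
  qed
qed

lemma row_word_split: "s < n \<Longrightarrow> \<exists>rest. row_word a b c n = row_word a b c s @ row_block a b c s @ rest"
  using row_word_prefix[of "Suc s" n a b c] by (auto simp: row_word_Suc)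

lemma take_row_word:
  assumes "s < n" "u \<le> a s + b s + c s"
  shows "take (row_start a b c s + u) (row_word a b c n) = row_word a b c s @ take u (row_block a b c s)"
proof -
  obtain rest where r: "row_word a b c n = row_word a b c s @ row_block a b c s @ rest" using row_word_split[OF assms(1)] by blast
  show ?thesis unfolding r using assms(2) by (simp add: length_row_word)
qed

lemma nth_row_word:
  assumes "s < n" "u < a s + b s + c s"
  shows "row_word a b c n ! (row_start a b c s + u) = row_block a b c s ! u"
proof -
  obtain rest where r: "row_word a b c n = row_word a b c s @ row_block a b c s @ rest" using row_word_split[OF assms(1)] by blast
  show ?thesis unfolding r using assms(2) by (simp add: length_row_word nth_append)
qed

lemma nth_row_block:
  assumes "u < a r + b r + c r"
  shows "row_block a b c r ! u = (if u < a r then Blue else if u < a r + b r then Black else Red)"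
  using assms by (simp add: row_block_def nth_append, arith)

lemma count_take_row_block:
  "length (filter (\<lambda>x. x = Blue) (take u (row_block a b c r))) = min u (a r)"
  "length (filter (\<lambda>x. x = Black) (take u (row_block a b c r))) = min (u - a r) (b r)"
  "length (filter (\<lambda>x. x = Red) (take u (row_block a b c r))) = min (u - a r - b r) (c r)"
  by (simp_all add: row_block_def filter_replicate)

lemma count_row_word:
  "length (filter (\<lambda>x. x = Blue) (row_word a b c s)) = (\<Sum>r<s. a r)"
  "length (filter (\<lambda>x. x = Black) (row_word a b c s)) = (\<Sum>r<s. b r)"
  "length (filter (\<lambda>x. x = Red) (row_word a b c s)) = (\<Sum>r<s. c r)"
  by (induction s) (simp_all add: row_word_Suc row_block_def filter_replicate)

lemma lower_balance_row_word:
  assumes "s < n" "u \<le> a s + b s + c s"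
  shows "balance (row_word a b c n) Blue Black (row_start a b c s + u) = excess a b s + int (min u (a s)) - int (min (u - a s) (b s))"
proof -
  have "balance (row_word a b c n) Blue Black (row_start a b c s + u) =
     int (\<Sum>r<s. a r) + int (min u (a s)) - (int (\<Sum>r<s. b r) + int (min (u - a s) (b s)))"
    unfolding balance_def take_row_word[where a=a and b=b and c=c, OF assms] by (simp add: count_take_row_block count_row_word)
  also have "\<dots> = excess a b s + int (min u (a s)) - int (min (u - a s) (b s))"
    by (simp add: excess_def sum_subtractf of_nat_sum)
  finally show ?thesis .
qed

lemma upper_balance_row_word:
  assumes "s < n" "u \<le> a s + b s + c s"
  shows "balance (row_word a b c n) Black Red (row_start a b c s + u) = excess b c s + int (min (u - a s) (b s)) - int (u - a s - b s)"
proof -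
  have m: "min (u - (a s + b s)) (c s) = u - (a s + b s)" using assms(2) by simp
  have "balance (row_word a b c n) Black Red (row_start a b c s + u) =
     int (\<Sum>r<s. b r) + int (min (u - a s) (b s)) - (int (\<Sum>r<s. c r) + int (u - a s - b s))"
    unfolding balance_def take_row_word[where a=a and b=b and c=c, OF assms] by (simp add: count_take_row_block count_row_word m)
  also have "\<dots> = excess b c s + int (min (u - a s) (b s)) - int (u - a s - b s)"
    by (simp add: excess_def sum_subtractf of_nat_sum)
  finally show ?thesis .
qed

lemma lower_balance_row_word_ge:
  assumes "s < n" "u \<le> a s + b s + c s"
  shows "min (excess a b s + int u) (excess a b (Suc s)) \<le>
    balance (row_word a b c n) Blue Black (row_start a b c s + u)"
  unfolding lower_balance_row_word[where a=a and b=b and c=c, OF assms] excess_Suc by (cases "u \<le> a s") auto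

lemma upper_balance_row_word_ge:
  assumes "s < n" "u \<le> a s + b s + c s"
  shows "min (excess b c s) (excess b c (Suc s) + int (a s + b s + c s - u)) \<le>
    balance (row_word a b c n) Black Red (row_start a b c s + u)"
  unfolding upper_balance_row_word[where a=a and b=b and c=c, OF assms] excess_Suc using assms(2) by (cases "u \<le> a s + b s") auto

lemma nth_row_word_colour:
  assumes "s < n" "u < a s + b s + c s"
  shows "row_word a b c n ! (row_start a b c s + u) =
    (if u < a s then Blue else if u < a s + b s then Black else Red)"
  using nth_row_word[where a=a and b=b and c=c, OF assms] nth_row_block[where a=a and b=b and c=c, OF assms(2)]
  by simp

lemma row_word_position:
  assumes "x < row_start a b c n"
  obtains s u where "s < n" "u < a s + b s + c s" "x = row_start a b c s + u"
  using assms
proof (induction n)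
  case (Suc n)
  show ?case
  proof (cases "x < row_start a b c n")
    case True then show ?thesis using Suc by (meson less_Suc_eq)
  next
    case False
    then show ?thesis using Suc.prems(1)[of n "x - row_start a b c n"] Suc.prems(2)
      by (simp add: row_start_Suc)
  qed
qed (simp add: row_start_def)

lemma row_word_position_le:
  assumes "x \<le> row_start a b c n" "0 < n"
  obtains s u where "s < n" "u \<le> a s + b s + c s" "x = row_start a b c s + u"
proof (cases "x < row_start a b c n")
  case True
  then obtain s u where "s < n" "u < a s + b s + c s" "x = row_start a b c s + u"
    by (rule row_word_position) blast
  then show ?thesis using that[of s u] by simp
next
  case False
  then have "x = row_start a b c (n - 1) + (a (n - 1) + b (n - 1) + c (n - 1))"
    using assms row_start_Suc[of a b c "n - 1"] by simp
  then show ?thesis using that[of "n - 1"] assms(2) by simp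
qed

lemma row_start_le_position:
  assumes "u < a s + b s + c s" "row_start a b c p \<le> row_start a b c s + u"
  shows "p \<le> s"
proof (rule ccontr)
  assume "\<not> p \<le> s"
  then have "row_start a b c (Suc s) \<le> row_start a b c p" using row_start_mono by simp
  then show False using assms row_start_Suc[of a b c s] by simp
qed

lemma row_word_lower_dyck:
  assumes "0 < n" "\<And>s. s \<le> n \<Longrightarrow> 0 \<le> excess a b s" "excess a b n = 0"
  shows "dyck_word (row_word a b c n) Blue Black"
proof -
  have "0 \<le> balance (row_word a b c n) Blue Black x" if "x \<le> length (row_word a b c n)" for x
  proof -
    have "x \<le> row_start a b c n" using that by (simp add: length_row_word)
    then obtain s u where su: "s < n" "u \<le> a s + b s + c s" "x = row_start a b c s + u"
      by (rule row_word_position_le[OF _ assms(1)]) blast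
    then show ?thesis
      using lower_balance_row_word_ge[where a=a and b=b and c=c, OF su(1,2)] assms(2)[of s] assms(2)[of "Suc s"] by simp
  qed
  moreover have "balance (row_word a b c n) Blue Black (length (row_word a b c n)) = 0"
    using lower_balance_row_word[of "n - 1" n "a (n - 1) + b (n - 1) + c (n - 1)" a b c]
      assms row_start_Suc[of a b c "n - 1"] excess_Suc[of a b "n - 1"] by (simp add: length_row_word)
  ultimately show ?thesis unfolding dyck_word_def by blast
qed

lemma row_word_upper_dyck:
  assumes "0 < n" "\<And>s. s \<le> n \<Longrightarrow> 0 \<le> excess b c s" "excess b c n = 0"
  shows "dyck_word (row_word a b c n) Black Red"
proof -
  have "0 \<le> balance (row_word a b c n) Black Red x" if "x \<le> length (row_word a b c n)" for x
  proof -
    have "x \<le> row_start a b c n" using that by (simp add: length_row_word)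
    then obtain s u where su: "s < n" "u \<le> a s + b s + c s" "x = row_start a b c s + u"
      by (rule row_word_position_le[OF _ assms(1)]) blast
    then show ?thesis
      using upper_balance_row_word_ge[where a=a and b=b and c=c, OF su(1,2)] assms(2)[of s] assms(2)[of "Suc s"] by simp
  qed
  moreover have "balance (row_word a b c n) Black Red (length (row_word a b c n)) = 0"
    using upper_balance_row_word[of "n - 1" n "a (n - 1) + b (n - 1) + c (n - 1)" a b c]
      assms row_start_Suc[of a b c "n - 1"] excess_Suc[of b c "n - 1"] by (simp add: length_row_word)
  ultimately show ?thesis unfolding dyck_word_def by blast
qed

lemma balance_row_start:
  assumes "s < n"
  shows "balance (row_word a b c n) Blue Black (row_start a b c s) = excess a b s"
    and "balance (row_word a b c n) Black Red (row_start a b c s) = excess b c s"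
  using lower_balance_row_word[of s n 0 a b c] upper_balance_row_word[of s n 0 a b c] assms by simp_all

lemma balance_row_end:
  assumes "s < n"
  shows "balance (row_word a b c n) Blue Black (row_start a b c (Suc s)) = excess a b (Suc s)"
    and "balance (row_word a b c n) Black Red (row_start a b c (Suc s)) = excess b c (Suc s)"
  using lower_balance_row_word[of s n "a s + b s + c s" a b c]
    upper_balance_row_word[of s n "a s + b s + c s" a b c] assms
  by (simp_all add: row_start_Suc excess_Suc)

lemma row_word_Z_arcs_imp_excess:
  assumes lower: "(d1, d3) \<in> canonical_arcs (row_word a b c n) Blue Black"
    and upper: "(d0, d2) \<in> canonical_arcs (row_word a b c n) Black Red"
    and order: "d0 < d1" "d1 < d2" "d2 < d3"
  obtains r t where "r < t" "t < n" "excess a b (Suc r) < excess a b (Suc t)"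
    "\<And>s. r \<le> s \<Longrightarrow> s < t \<Longrightarrow> excess b c (Suc t) < excess b c (Suc s)"
proof -
  let ?cs = "row_word a b c n"
  let ?S = "row_start a b c"
  have l: "d3 < length ?cs" "?cs ! d1 = Blue" "\<And>x. d1 < x \<Longrightarrow> x \<le> d3 \<Longrightarrow>
      balance ?cs Blue Black d1 < balance ?cs Blue Black x"
    using lower canonical_arc_colours[OF lower] unfolding canonical_arcs_def by auto
  have u: "d2 < length ?cs" "?cs ! d0 = Black" "?cs ! d2 = Red"
    "\<And>x. d0 < x \<Longrightarrow> x \<le> d2 \<Longrightarrow> balance ?cs Black Red d0 < balance ?cs Black Red x"
    "balance ?cs Black Red (Suc d2) = balance ?cs Black Red d0"
    using upper canonical_arc_colours[OF upper] unfolding canonical_arcs_def by auto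
  have len: "length ?cs = ?S n" by (rule length_row_word)
  obtain r0 u0 where p0: "r0 < n" "u0 < a r0 + b r0 + c r0" "d0 = ?S r0 + u0"
    using row_word_position[of d0 a b c n] order u(1) len by auto
  obtain r1 u1 where p1: "r1 < n" "u1 < a r1 + b r1 + c r1" "d1 = ?S r1 + u1"
    using row_word_position[of d1 a b c n] order u(1) len by auto
  obtain r2 u2 where p2: "r2 < n" "u2 < a r2 + b r2 + c r2" "d2 = ?S r2 + u2"
    using row_word_position[of d2 a b c n] u(1) len by auto
  have c0: "a r0 \<le> u0" and c1: "u1 < a r1" and c2: "a r2 + b r2 \<le> u2"
    using nth_row_word_colour[of r0 n u0 a b c] nth_row_word_colour[of r1 n u1 a b c]
      nth_row_word_colour[of r2 n u2 a b c] p0 p1 p2 u(2,3) l(2)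
    by (auto split: if_splits)
  have "r0 \<le> r1" using row_start_le_position[of u1 a r1 b c r0] p0(3) p1 order by simp
  moreover have "r0 \<noteq> r1" using p0(3) p1(3) order c0 c1 by auto
  ultimately have r01: "r0 < r1" by simp
  have r12: "r1 \<le> r2" using row_start_le_position[of u2 a r2 b c r1] p1(3) p2 order by simp
  have "excess a b r1 \<le> balance ?cs Blue Black d1"
    using lower_balance_row_word[of r1 n u1 a b c] p1 c1 by simp
  also have "\<dots> < balance ?cs Blue Black (Suc d2)" using l(3) order by simp
  also have "\<dots> = excess a b (Suc r2)"
    using lower_balance_row_word[of r2 n "Suc u2" a b c] p2 c2 excess_Suc[of a b r2] by simp
  finally have rise: "excess a b (Suc (r1 - 1)) < excess a b (Suc r2)" using r01 by simp
  have red_end: "excess b c (Suc r2) \<le> balance ?cs Black Red (Suc d2)"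
    using upper_balance_row_word[of r2 n "Suc u2" a b c] p2 c2 excess_Suc[of b c r2] by simp
  have drop: "excess b c (Suc r2) < excess b c (Suc s)" if "r1 - 1 \<le> s" "s < r2" for s
  proof -
    have "?S (Suc r0) \<le> ?S (Suc s)" "?S (Suc s) \<le> ?S r2"
      using row_start_mono that r01 by simp_all
    then have "d0 < ?S (Suc s)" "?S (Suc s) \<le> d2" using p0 p2 row_start_Suc[of a b c r0] by simp_all
    then show ?thesis
      using u(4)[of "?S (Suc s)"] u(5) balance_row_start(2)[of "Suc s" n a b c] that p2(1) red_end
      by simp
  qed
  show ?thesis using that[OF _ p2(1) rise drop] r01 r12 by simp
qed

lemma upper_balance_before_last_red:
  assumes "t < n" "R1 \<le> t"
    and drop: "\<And>s. R1 \<le> s \<Longrightarrow> s \<le> t \<Longrightarrow> excess b c (Suc t) < excess b c s"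
    and x: "row_start a b c R1 \<le> x" "x < row_start a b c (Suc t)"
  shows "excess b c (Suc t) < balance (row_word a b c n) Black Red x"
proof -
  obtain s u where su: "s < Suc t" "u < a s + b s + c s" "x = row_start a b c s + u"
    using row_word_position[of x a b c "Suc t"] x(2) by blast
  have "R1 \<le> s" using row_start_le_position[of u a s b c R1] su x(1) by simp
  moreover have "excess b c (Suc t) < excess b c (Suc s) + int (a s + b s + c s - u)"
    using drop[of "Suc s"] su(1,2) \<open>R1 \<le> s\<close> by (cases "s = t") auto
  ultimately show ?thesis
    using upper_balance_row_word_ge[of s n u a b c] drop[of s] su assms(1) by simp
qed

lemma lower_balance_after_blue:
  assumes "t < n" "R1 \<le> t" "excess a b R1 + int u1 + 1 = excess a b (Suc t)"
    and rise: "\<And>s. R1 < s \<Longrightarrow> s \<le> Suc t \<Longrightarrow> excess a b (Suc t) \<le> excess a b s"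
    and x: "row_start a b c R1 + u1 < x" "x \<le> row_start a b c (Suc t)"
  shows "excess a b (Suc t) \<le> balance (row_word a b c n) Blue Black x"
proof -
  obtain s u where su: "s < Suc t" "u \<le> a s + b s + c s" "x = row_start a b c s + u"
    using row_word_position_le[of x a b c "Suc t"] x(2) by blast
  have "\<not> s < R1"
  proof
    assume "s < R1"
    then have "row_start a b c (Suc s) \<le> row_start a b c R1" using row_start_mono by simp
    then show False using su x(1) row_start_Suc[of a b c s] by simp
  qed
  then have "excess a b (Suc t) \<le> excess a b s + int u"
    using rise[of s] assms(3) su(1,3) x(1) by (cases "s = R1") auto
  then show ?thesis
    using lower_balance_row_word_ge[of s n u a b c] rise[of "Suc s"] su assms(1) \<open>\<not> s < R1\<close> by simp
qed

lemma excess_imp_row_word_Z_arcs: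
  assumes dyck: "dyck_word (row_word a b c n) Blue Black" "dyck_word (row_word a b c n) Black Red"
    and rt: "r0 < t" "t < n" "excess a b (Suc r0) < excess a b (Suc t)"
    and drop: "\<And>s. r0 \<le> s \<Longrightarrow> s < t \<Longrightarrow> excess b c (Suc t) < excess b c (Suc s)"
  shows "\<exists>d0 d1 d2 d3. (d1, d3) \<in> canonical_arcs (row_word a b c n) Blue Black \<and>
    (d0, d2) \<in> canonical_arcs (row_word a b c n) Black Red \<and> d0 < d1 \<and> d1 < d2 \<and> d2 < d3"
proof -
  let ?cs = "row_word a b c n"
  let ?S = "row_start a b c"
  let ?E = "excess a b" and ?G = "excess b c"
  obtain r where r: "r0 \<le> r" "r < t" "?E (Suc r) < ?E (Suc t)"
    and after: "\<And>s. r < s \<Longrightarrow> s < t \<Longrightarrow> ?E (Suc t) \<le> ?E (Suc s)"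
    using last_rise[of r0 t "\<lambda>s. ?E (Suc s)"] rt by blast
  define R1 where "R1 = Suc r"
  have R1: "R1 \<le> t" "R1 < n" using r rt by (simp_all add: R1_def)
  have rise: "?E (Suc t) \<le> ?E s" if "R1 < s" "s \<le> Suc t" for s
    using after[of "s - 1"] that by (cases "s = Suc t") (auto simp: R1_def)
  have drop': "?G (Suc t) < ?G s" if "R1 \<le> s" "s \<le> t" for s
    using drop[of "s - 1"] that r(1) by (simp add: R1_def)
  define u1 where "u1 = nat (?E (Suc t) - 1 - ?E R1)"
  have u1: "?E R1 + int u1 + 1 = ?E (Suc t)" using r(3) by (simp add: u1_def R1_def)
  have "u1 < a R1" using rise[of "Suc R1"] R1 u1 excess_Suc[of a b R1] by simp
  define d1 where "d1 = ?S R1 + u1"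
  have d1: "d1 < ?S R1 + a R1" "?cs ! d1 = Blue" "balance ?cs Blue Black d1 = ?E (Suc t) - 1"
    using \<open>u1 < a R1\<close> nth_row_word_colour[of R1 n u1 a b c] lower_balance_row_word[of R1 n u1 a b c]
      R1(2) u1 by (simp_all add: d1_def)
  have "0 < c t" using drop'[of t] R1(1) excess_Suc[of b c t] by simp
  define k where "k = a t + b t + c t - 1"
  have k: "a t + b t \<le> k" "Suc k = a t + b t + c t" using \<open>0 < c t\<close> by (simp_all add: k_def)
  define d2 where "d2 = ?S t + k"
  have d2: "Suc d2 = ?S (Suc t)" "?S t + a t \<le> d2" "?cs ! d2 = Red"
    using k nth_row_word_colour[of t n k a b c] rt(2) by (simp_all add: d2_def row_start_Suc)
  have len: "?S (Suc t) \<le> length ?cs" "?S (Suc R1) \<le> length ?cs"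
    using row_start_mono[of "Suc t" n a b c] row_start_mono[of "Suc R1" n a b c] R1 rt(2)
    by (simp_all add: length_row_word)
  obtain d0 where up: "(d0, d2) \<in> canonical_arcs ?cs Black Red"
    using canonical_arc_to_right[OF _ dyck(2), of d2] d2 len by auto
  obtain d3 where low: "(d1, d3) \<in> canonical_arcs ?cs Blue Black"
    using canonical_arc_from_left[OF _ dyck(1), of d1] d1 len row_start_Suc[of a b c R1] by auto
  have "balance ?cs Black Red d0 = ?G (Suc t)"
    using up d2(1) balance_row_end(2)[OF rt(2)] unfolding canonical_arcs_def by simp
  then have "\<not> ?S R1 \<le> d0"
    using upper_balance_before_last_red[OF rt(2) R1(1) drop', where a = a and x = d0] up d2(1)
    unfolding canonical_arcs_def by auto
  then have "d0 < d1" by (simp add: d1_def)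
  moreover have "d1 < d2"
    using d1(1) d2(2) row_start_mono[of "Suc R1" t a b c] row_start_Suc[of a b c R1] R1(1)
    by (cases "R1 = t") auto
  moreover have "d2 < d3"
  proof (rule ccontr)
    assume "\<not> d2 < d3"
    then have "excess a b (Suc t) \<le> balance ?cs Blue Black (Suc d3)"
      using lower_balance_after_blue[OF rt(2) R1(1) u1 rise, where c = c and x = "Suc d3"] low d2(1)
      unfolding canonical_arcs_def d1_def by auto
    then show False using low d1(3) unfolding canonical_arcs_def by simp
  qed
  ultimately show ?thesis using up low by blast
qed

lemma excess_east_at:
  "excess (east_at x) (east_at y) (Suc s) = int (east_upto x s) - int (east_upto y s)"
  by (simp add: excess_def sum_subtractf flip: of_nat_sum sum_east_at)

lemma dots_eq_row_word:
  "dots j lo mid up = row_word (east_at lo) (east_at mid) (east_at up) (Suc j)"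
  unfolding dots_def row_word_def row_block_def[abs_def] by simp

lemma excess_east_at_gap: "excess (east_at \<nu>) (east_at g) (Suc s) = gap \<nu> g s"
  by (simp add: excess_east_at gap_def)

lemma gap_diff: "gap \<nu> g' s - gap \<nu> g s = gap g g' s"
  by (simp add: gap_def)

lemma gap_top:
  assumes "above g \<nu>" "cntN \<nu> \<le> s"
  shows "gap \<nu> g s = 0"
  using assms east_upto_top[of \<nu> s] east_upto_top[of g s] by (simp add: gap_def above_def endpt_def)

lemma dots_dyck_words:
  assumes above: "above up mid" "above mid lo" and j: "cntN lo = j"
  shows "dyck_word (dots j lo mid up) Blue Black" "dyck_word (dots j lo mid up) Black Red"
proof -
  have "0 \<le> excess (east_at lo) (east_at mid) s \<and> 0 \<le> excess (east_at mid) (east_at up) s" for s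
  proof (cases s)
    case (Suc s')
    then show ?thesis using gap_nonneg[OF above(2)] gap_nonneg[OF above(1)] by (simp add: excess_east_at_gap)
  qed (simp add: excess_def)
  moreover have "cntN mid = j" using above(2) j by (simp add: above_def endpt_def)
  then have "gap lo mid j = 0" "gap mid up j = 0"
    using gap_top[OF above(2)] gap_top[OF above(1)] j by simp_all
  ultimately show "dyck_word (dots j lo mid up) Blue Black" "dyck_word (dots j lo mid up) Black Red"
    unfolding dots_eq_row_word
    by (auto intro!: row_word_lower_dyck row_word_upper_dyck simp: excess_east_at_gap)
qed

lemma has_Z_pattern_iff_profile_Z:
  assumes above: "above up mid" "above mid lo" and j: "cntN lo = j"
  shows "has_Z_pattern j lo mid up \<longleftrightarrow> profile_Z (gap lo mid) (gap lo up)"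
proof -
  let ?cs = "row_word (east_at lo) (east_at mid) (east_at up) (Suc j)"
  have dyck: "dyck_word ?cs Blue Black" "dyck_word ?cs Black Red"
    using dots_dyck_words[OF assms] unfolding dots_eq_row_word .
  then have arcs: "lower_arcs j lo mid up = canonical_arcs ?cs Blue Black"
    "upper_arcs j lo mid up = canonical_arcs ?cs Black Red"
    unfolding lower_arcs_def upper_arcs_def dots_eq_row_word by (simp_all add: the_nc_matching)
  show ?thesis
  proof
    assume "has_Z_pattern j lo mid up"
    then obtain d0 d1 d2 d3 where "(d1, d3) \<in> canonical_arcs ?cs Blue Black"
      "(d0, d2) \<in> canonical_arcs ?cs Black Red" "d0 < d1" "d1 < d2" "d2 < d3"
      unfolding has_Z_pattern_def arcs by blast
    from row_word_Z_arcs_imp_excess[OF this] show "profile_Z (gap lo mid) (gap lo up)"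
      by (metis profile_ZI excess_east_at_gap gap_diff)
  next
    assume "profile_Z (gap lo mid) (gap lo up)"
    then obtain r t where rt: "r < t" "gap lo mid r < gap lo mid t"
      and drop: "\<And>s. r \<le> s \<Longrightarrow> s < t \<Longrightarrow> gap lo up t - gap lo mid t < gap lo up s - gap lo mid s"
      unfolding profile_Z_def by blast
    have "t < j"
      using rt gap_top[OF above(2), of t] j gap_nonneg[OF above(2), of r] by (cases "j \<le> t") auto
    then show "has_Z_pattern j lo mid up"
      unfolding has_Z_pattern_def arcs
      using excess_imp_row_word_Z_arcs[OF dyck rt(1)] rt drop by (simp add: excess_east_at_gap gap_diff)
  qed
qed

theorem lemma2:
  fixes i j :: nat and lo mid up :: walk
  assumes "(lo, mid, up) \<in> Rset i j"
  shows "(lo, mid, up) \<in> Gset i j \<longleftrightarrow> \<not> has_Z_pattern j lo mid up"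
proof -
  have ends: "endpt lo = (i, j)" and up_mid: "above up mid" and mid_lo: "above mid lo"
    using assms by (simp_all add: Rset_def)
  have "(lo, mid, up) \<in> Gset i j \<longleftrightarrow> tam_le lo mid up"
    using ends mid_lo above_trans[OF up_mid mid_lo] by (simp add: Gset_def Wset_def)
  also have "\<dots> \<longleftrightarrow> \<not> profile_Z (gap lo mid) (gap lo up)"
    using tam_le_not_profile_Z not_profile_Z_tam_le[OF _ mid_lo up_mid] by blast
  also have "\<dots> \<longleftrightarrow> \<not> has_Z_pattern j lo mid up"
    using has_Z_pattern_iff_profile_Z[OF up_mid mid_lo] ends by (simp add: endpt_def)
  finally show ?thesis .
qed

end
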